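(* Let $m,\ell\ge1$ and $n=m\ell$. The number of $(m+2)$-angulations of the once-punctured polygon $P_n^\bullet$ is $m\binom{n+\ell-1}{n}=\binom{n+\ell-1}{\ell}$.
   Context: $P_n^\bullet$ is a disc with $n$ marked points $v_0,\ldots,v_{n-1}$ on its boundary and one marked point $\bullet$ (the puncture) in its interior. An arc is a non-self-intersecting curve with endpoints at marked points, interior avoiding marked points, up to isotopy, not isotopic to a boundary segment or contractible; arcs are non-crossing if they have non-crossing representatives. For $m\ge1$, an $(m+2)$-angulation of $P_n^\bullet$ is a set $T$ of pairwise non-crossing arcs such that every connected component of $P_n^\bullet\setminus T$ is an $(m+2)$-gon (sides counted with multiplicity). *)

theory Defs
  imports Main
begin

text \<open>
Combinatorial model of the once-punctured polygon P_n with boundary marked points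
v_0,...,v_{n-1} (in counterclockwise order) and a puncture.

Isotopy classes of arcs:
  Punct i     : the arc from v_i to the puncture (i < n);
  Bdry i d    : the arc from v_i to v_{(i+d) mod n} (2 <= d <= n) which, together with
                the boundary path v_i, v_{i+1}, ..., v_{i+d} (indices mod n), bounds a disc
                not containing the puncture.  Bdry i n is the loop at v_i around the puncture;
                d = 1 would be a boundary segment and d = 0 a contractible loop, both excluded.

Crossing and faces are described in the universal-cover picture: the boundary marked
points lift to the integers (v_i to all i + k*n), the puncture lifts to a single ideal point
Inf, a boundary arc Bdry i d lifts to the chords (i+kn, i+d+kn), a puncture arc to the
rays (i+kn, Inf).  Boundary segments lift to the edges (a, a+1).
\<close>

datatype arc = Punct nat | Bdry nat nat

definition valid_arc :: "nat \<Rightarrow> arc \<Rightarrow> bool" where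
  "valid_arc n \<alpha> = (case \<alpha> of
      Punct i \<Rightarrow> i < n
    | Bdry i d \<Rightarrow> i < n \<and> 2 \<le> d \<and> d \<le> n)"

datatype lv = Fin int | Inf

fun lv_less :: "lv \<Rightarrow> lv \<Rightarrow> bool" where
  "lv_less (Fin a) (Fin b) = (a < b)"
| "lv_less (Fin a) Inf = True"
| "lv_less Inf _ = False"

fun lift :: "nat \<Rightarrow> arc \<Rightarrow> (lv \<times> lv) set" where
  "lift n (Punct i) = {(Fin (int i + k * int n), Inf) | k. True}"
| "lift n (Bdry i d) = {(Fin (int i + k * int n), Fin (int i + int d + k * int n)) | k. True}"

definition lifts :: "nat \<Rightarrow> arc set \<Rightarrow> (lv \<times> lv) set" where
  "lifts n T = (\<Union>\<alpha>\<in>T. lift n \<alpha>)"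

fun lcross :: "lv \<times> lv \<Rightarrow> lv \<times> lv \<Rightarrow> bool" where
  "lcross (Fin a, Fin b) (Fin c, Fin d) = ((a < c \<and> c < b \<and> b < d) \<or> (c < a \<and> a < d \<and> d < b))"
| "lcross (Fin a, Fin b) (Fin c, Inf) = (a < c \<and> c < b)"
| "lcross (Fin c, Inf) (Fin a, Fin b) = (a < c \<and> c < b)"
| "lcross _ _ = False"

text \<open>Two arcs are non-crossing iff no lifts of them cross (this also covers self-crossings).\<close>
definition noncrossing :: "nat \<Rightarrow> arc set \<Rightarrow> bool" where
  "noncrossing n T = (\<forall>\<alpha>\<in>T. \<forall>\<beta>\<in>T. \<forall>p\<in>lift n \<alpha>. \<forall>q\<in>lift n \<beta>. \<not> lcross p q)"

definition is_side :: "nat \<Rightarrow> arc set \<Rightarrow> lv \<Rightarrow> lv \<Rightarrow> bool" where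
  "is_side n T x y = ((\<exists>a. x = Fin a \<and> y = Fin (a + 1)) \<or> (x, y) \<in> lifts n T)"

text \<open>Each polygonal component of the complement of T lifts to such a polygon, with the
  same number of sides counted with multiplicity (e.g. a self-folded triangle lifts to a
  triangle).\<close>
definition is_face :: "nat \<Rightarrow> arc set \<Rightarrow> lv list \<Rightarrow> bool" where
  "is_face n T xs =
     (3 \<le> length xs \<and> sorted_wrt lv_less xs \<and>
      (\<forall>i. i + 1 < length xs \<longrightarrow> is_side n T (xs ! i) (xs ! (i + 1))) \<and>
      is_side n T (hd xs) (last xs) \<and>
      (\<forall>i j. i + 1 < j \<and> j < length xs \<and> \<not> (i = 0 \<and> j = length xs - 1)
              \<longrightarrow> (xs ! i, xs ! j) \<notin> lifts n T))"

text \<open>If no arc of T ends at the puncture, the component containing the puncture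
  is a punctured region, not a polygon; otherwise every component is a polygon and these are
  exactly the faces above.\<close>
definition is_angulation :: "nat \<Rightarrow> nat \<Rightarrow> arc set \<Rightarrow> bool" where
  "is_angulation m n T =
     ((\<forall>\<alpha>\<in>T. valid_arc n \<alpha>) \<and> noncrossing n T \<and>
      (\<exists>i. Punct i \<in> T) \<and>
      (\<forall>xs. is_face n T xs \<longrightarrow> length xs = m + 2))"

end

theory Submission
  imports Defs "HOL-Library.Multiset"
begin

text \<open>
  Record each arc by its starting vertex (v_i for both Punct i and Bdry i d), so that an
  (m+2)-angulation T yields a multiset of vertices. On the universal cover define the height
  H (x + 1) = H x + m * deg x - 1, where deg x counts the arcs starting at x. Telescoping H
  around the faces, all of which are (m+2)-gons, shows that H is minimal exactly at the ends
  of the puncture arcs, and that the k-th outermost arc starting at x (the puncture arc, if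
  any, being number 0) ends at the first y > x with H y \<le> H x - 1 + m * k. Hence T is
  determined by its multiset. Conversely this recipe turns every multiset on the n vertices
  into an angulation provided its size l satisfies n = m * l, which periodicity of H forces.
  So the angulations are counted by the multisets of size l on n points.
\<close>

lemma strict_sorted_nth_less_iff:
  fixes xs :: "'a::linorder list"
  assumes "sorted_wrt (<) xs" "i < length xs" "j < length xs"
  shows "xs ! i < xs ! j \<longleftrightarrow> i < j"
  using assms by (metis linorder_neqE_nat order_less_asym sorted_wrt_nth_less)

lemma consecutive_around:
  fixes xs :: "'a::linorder list"
  assumes "xs \<noteq> []" "hd xs \<le> q" "q \<le> last xs" "q \<notin> set xs"
  shows "\<exists>s. s + 1 < length xs \<and> xs ! s < q \<and> q < xs ! (s + 1)"
  using assms
proof (induction xs)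
  case (Cons x xs)
  then have "x < q" "xs \<noteq> []" by auto
  show ?case
  proof (cases "q < hd xs")
    case True
    then show ?thesis
      using \<open>x < q\<close> \<open>xs \<noteq> []\<close> by (intro exI[of _ 0]) (simp add: hd_conv_nth)
  next
    case False
    then obtain s where "s + 1 < length xs" "xs ! s < q" "q < xs ! (s + 1)"
      using Cons.IH[OF \<open>xs \<noteq> []\<close>] Cons.prems \<open>xs \<noteq> []\<close> by (auto simp: not_less)
    then show ?thesis by (intro exI[of _ "Suc s"]) simp
  qed
qed simp

lemma telescope_after_first:
  fixes w e :: "nat \<Rightarrow> int"
  assumes step: "\<And>s. s + 1 < len \<Longrightarrow> w (s + 1) = w s - 1 + e s"
    and flat: "\<And>s. 1 \<le> s \<Longrightarrow> s + 1 < len \<Longrightarrow> e s = 0"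
    and t: "1 \<le> t" "t < len"
  shows "w t = w 0 - int t + e 0"
  using t
proof (induction t)
  case (Suc t)
  then show ?case
    using step[of t] flat[of t] by (cases "t = 0") auto
qed simp

definition prefix_sum :: "(int \<Rightarrow> 'a::ab_group_add) \<Rightarrow> int \<Rightarrow> 'a" where
  "prefix_sum f x = (if 0 \<le> x then (\<Sum>p\<in>{0..<x}. f p) else - (\<Sum>p\<in>{x..<0}. f p))"

lemma prefix_sum_Suc: "prefix_sum f (x + 1) = prefix_sum f x + f x"
proof -
  consider "0 \<le> x" | "x = -1" | "x < -1" by linarith
  then show ?thesis
  proof cases
    case 1
    then have "{0..<x + 1} = insert x {0..<x}" by auto
    with 1 show ?thesis unfolding prefix_sum_def by simp
  next
    case 2
    then have "{x..<0} = {x}" by auto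
    with 2 show ?thesis unfolding prefix_sum_def by simp
  next
    case 3
    then have "{x..<0} = insert x {x + 1..<0}" by auto
    with 3 show ?thesis unfolding prefix_sum_def by (simp add: algebra_simps)
  qed
qed

lemma prefix_sum_of_nat: "prefix_sum f (int k) = (\<Sum>p<k. f (int p))"
proof (induction k)
  case (Suc k)
  then show ?case using prefix_sum_Suc[of f "int k"] by (simp add: add.commute)
qed (simp add: prefix_sum_def)

lemma prefix_sum_add_period:
  assumes periodic: "\<And>x. f (x + p) = f x"
  shows "prefix_sum f (x + p) = prefix_sum f x + prefix_sum f p"
proof (induction x rule: int_induct[where k = 0])
  case base
  show ?case by (simp add: prefix_sum_def)
next
  case (step1 x)
  then show ?case
    using prefix_sum_Suc[of f x] prefix_sum_Suc[of f "x + p"] periodic[of x]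
    by (simp add: algebra_simps)
next
  case (step2 x)
  then show ?case
    using prefix_sum_Suc[of f "x - 1"] prefix_sum_Suc[of f "x - 1 + p"] periodic[of "x - 1"]
    by (simp add: algebra_simps)
qed

lemma prefix_sum_periodic:
  assumes "\<And>x. f (x + p) = f x" and "prefix_sum f p = 0"
  shows "prefix_sum f (x + j * p) = prefix_sum f x"
proof (induction j rule: int_induct[where k = 0])
  case (step1 j)
  then show ?case
    using prefix_sum_add_period[of f p "x + j * p", OF assms(1)] assms(2)
    by (simp add: algebra_simps)
next
  case (step2 j)
  then show ?case
    using prefix_sum_add_period[of f p "x + (j - 1) * p", OF assms(1)] assms(2)
    by (simp add: algebra_simps)
qed simp

definition first_below :: "(int \<Rightarrow> int) \<Rightarrow> int \<Rightarrow> int \<Rightarrow> int" where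
  "first_below H x t = x + int (LEAST d::nat. 0 < d \<and> H (x + int d) \<le> t)"
  \<comment> \<open>unspecified if H stays above t after x\<close>

lemma first_below_le:
  assumes "x < b" "H b \<le> t"
  shows "first_below H x t \<le> b"
proof -
  have "(LEAST d::nat. 0 < d \<and> H (x + int d) \<le> t) \<le> nat (b - x)"
    by (rule Least_le) (use assms in simp)
  then show ?thesis unfolding first_below_def using assms by simp
qed

lemma first_below_eqI:
  assumes "x < b" "H b \<le> t" "\<And>y. x < y \<Longrightarrow> y < b \<Longrightarrow> t < H y"
  shows "first_below H x t = b"
proof -
  have "(LEAST d::nat. 0 < d \<and> H (x + int d) \<le> t) = nat (b - x)"
  proof (rule Least_equality)
    fix d :: nat
    assume "0 < d \<and> H (x + int d) \<le> t"
    then show "nat (b - x) \<le> d"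
      using assms(3)[of "x + int d"] by force
  qed (use assms in simp)
  then show ?thesis unfolding first_below_def using assms by simp
qed

lemma first_below_props:
  assumes step: "\<And>y. H y - 1 \<le> H (y + 1)" and b: "x < b" "H b \<le> t" and start: "t < H (x + 1)"
  shows "x + 1 < first_below H x t" "H (first_below H x t) = t"
    "\<And>y. x < y \<Longrightarrow> y < first_below H x t \<Longrightarrow> t < H y"
proof -
  define P where "P = (\<lambda>d::nat. 0 < d \<and> H (x + int d) \<le> t)"
  define d where "d = (LEAST d. P d)"
  have Pd: "P d" unfolding d_def by (rule LeastI[of P "nat (b - x)"]) (use b in \<open>simp add: P_def\<close>)
  have below: "t < H (x + int e)" if "0 < e" "e < d" for e
    using not_less_Least[of e P] that unfolding d_def P_def by force
  have fb: "first_below H x t = x + int d" unfolding first_below_def P_def[symmetric] d_def ..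
  have "d \<noteq> 1" using Pd start unfolding P_def by (auto simp: add.commute)
  then have "2 \<le> d" using Pd unfolding P_def by auto
  then show "x + 1 < first_below H x t" using fb by simp
  have "t < H (x + int (d - 1))" using below[of "d - 1"] \<open>2 \<le> d\<close> by simp
  moreover have "H (x + int (d - 1)) - 1 \<le> H (x + int d)"
    using step[of "x + int (d - 1)"] \<open>2 \<le> d\<close> by (simp add: of_nat_diff add.assoc)
  ultimately show "H (first_below H x t) = t" using Pd fb unfolding P_def by simp
  fix y assume "x < y" "y < first_below H x t"
  then show "t < H y" using below[of "nat (y - x)"] fb by simp
qed

section \<open>Lifts of arcs to the universal cover\<close>

abbreviation valid_arcs :: "nat \<Rightarrow> arc set \<Rightarrow> bool" where
  "valid_arcs n T \<equiv> \<forall>\<alpha>\<in>T. valid_arc n \<alpha>"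

lemma finite_valid_arcs:
  assumes "valid_arcs n T"
  shows "finite T"
proof (rule finite_subset)
  show "T \<subseteq> Punct ` {..<n} \<union> case_prod Bdry ` ({..<n} \<times> {..n})"
  proof
    fix \<alpha> assume "\<alpha> \<in> T"
    then have "valid_arc n \<alpha>" using assms by blast
    then show "\<alpha> \<in> Punct ` {..<n} \<union> case_prod Bdry ` ({..<n} \<times> {..n})"
      unfolding valid_arc_def by (cases \<alpha>) auto
  qed
qed simp

definition chord :: "nat \<Rightarrow> arc set \<Rightarrow> int \<Rightarrow> int \<Rightarrow> bool" where
  "chord n T x y \<longleftrightarrow> x < y \<and> Bdry (nat (x mod int n)) (nat (y - x)) \<in> T"

definition ray :: "nat \<Rightarrow> arc set \<Rightarrow> int \<Rightarrow> bool" where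
  "ray n T x \<longleftrightarrow> Punct (nat (x mod int n)) \<in> T"

lemma ray_shift: "ray n T (x + j * int n) \<longleftrightarrow> ray n T x"
  unfolding ray_def by simp

lemma chord_length:
  assumes "valid_arcs n T" "chord n T x y"
  shows "x + 2 \<le> y" "y \<le> x + int n"
proof -
  have "x < y" "valid_arc n (Bdry (nat (x mod int n)) (nat (y - x)))"
    using assms unfolding chord_def by auto
  then show "x + 2 \<le> y" "y \<le> x + int n" unfolding valid_arc_def by auto
qed

lemma lifts_cases:
  assumes "P \<in> lifts n T"
  obtains x y where "P = (Fin x, Fin y)" | x where "P = (Fin x, Inf)"
proof -
  obtain \<alpha> where "P \<in> lift n \<alpha>" using assms unfolding lifts_def by auto
  then show ?thesis using that by (cases \<alpha>) auto
qed

lemma lift_Fin_Fin_iff: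
  assumes "valid_arcs n T" "0 < n"
  shows "(Fin x, Fin y) \<in> lifts n T \<longleftrightarrow> chord n T x y"
proof
  assume "(Fin x, Fin y) \<in> lifts n T"
  then obtain \<alpha> where \<alpha>: "\<alpha> \<in> T" "(Fin x, Fin y) \<in> lift n \<alpha>" unfolding lifts_def by auto
  then obtain i d where "\<alpha> = Bdry i d" by (cases \<alpha>) auto
  with \<alpha> obtain k where k: "x = int i + k * int n" "y = int i + int d + k * int n" by auto
  have "i < n" "2 \<le> d" using \<alpha> \<open>\<alpha> = Bdry i d\<close> assms(1) unfolding valid_arc_def by auto
  then have "x mod int n = int i" using k by (simp add: mod_pos_pos_trivial)
  then show "chord n T x y" unfolding chord_def using \<alpha> \<open>\<alpha> = Bdry i d\<close> k \<open>2 \<le> d\<close> by auto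
next
  assume ch: "chord n T x y"
  let ?i = "nat (x mod int n)" and ?k = "x div int n"
  have "x = int ?i + ?k * int n" "y = int ?i + int (nat (y - x)) + ?k * int n"
    using ch assms(2) unfolding chord_def by simp_all
  then have "(Fin x, Fin y) \<in> lift n (Bdry ?i (nat (y - x)))"
    by (simp only: lift.simps) blast
  with ch show "(Fin x, Fin y) \<in> lifts n T"
    unfolding lifts_def chord_def by blast
qed

lemma lift_Fin_Inf_iff:
  assumes "valid_arcs n T" "0 < n"
  shows "(Fin x, Inf) \<in> lifts n T \<longleftrightarrow> ray n T x"
proof
  assume "(Fin x, Inf) \<in> lifts n T"
  then obtain \<alpha> where \<alpha>: "\<alpha> \<in> T" "(Fin x, Inf) \<in> lift n \<alpha>" unfolding lifts_def by auto
  then obtain i where "\<alpha> = Punct i" by (cases \<alpha>) auto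
  with \<alpha> obtain k where k: "x = int i + k * int n" by auto
  have "i < n" using \<alpha> \<open>\<alpha> = Punct i\<close> assms(1) unfolding valid_arc_def by auto
  then have "x mod int n = int i" using k by (simp add: mod_pos_pos_trivial)
  then show "ray n T x" unfolding ray_def using \<alpha> \<open>\<alpha> = Punct i\<close> by auto
next
  assume r: "ray n T x"
  let ?i = "nat (x mod int n)" and ?k = "x div int n"
  have "x = int ?i + ?k * int n" using assms(2) by simp
  then have "(Fin x, Inf) \<in> lift n (Punct ?i)" by (simp only: lift.simps) blast
  with r show "(Fin x, Inf) \<in> lifts n T"
    unfolding lifts_def ray_def by blast
qed

lemma noncrossing_lifts: "noncrossing n T \<longleftrightarrow> (\<forall>P\<in>lifts n T. \<forall>Q\<in>lifts n T. \<not> lcross P Q)"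
  unfolding noncrossing_def lifts_def by blast

lemma noncrossing_chords:
  assumes "noncrossing n T" "valid_arcs n T" "0 < n" "chord n T a b" "chord n T p q"
  shows "\<not> (a < p \<and> p < b \<and> b < q)"
proof -
  have "(Fin a, Fin b) \<in> lifts n T" "(Fin p, Fin q) \<in> lifts n T"
    using assms(4,5) lift_Fin_Fin_iff[OF assms(2,3)] by simp_all
  then have "\<not> lcross (Fin a, Fin b) (Fin p, Fin q)" using assms(1) noncrossing_lifts by blast
  then show ?thesis by simp
qed

lemma noncrossing_chord_ray:
  assumes "noncrossing n T" "valid_arcs n T" "0 < n" "chord n T a b" "ray n T p"
  shows "\<not> (a < p \<and> p < b)"
proof -
  have "(Fin a, Fin b) \<in> lifts n T" "(Fin p, Inf) \<in> lifts n T"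
    using assms(4,5) lift_Fin_Fin_iff[OF assms(2,3)] lift_Fin_Inf_iff[OF assms(2,3)] by simp_all
  then have "\<not> lcross (Fin a, Fin b) (Fin p, Inf)" using assms(1) noncrossing_lifts by blast
  then show ?thesis by simp
qed

lemma noncrossingI:
  assumes "valid_arcs n T" "0 < n"
    and chords: "\<And>a b p q. chord n T a b \<Longrightarrow> chord n T p q \<Longrightarrow> \<not> (a < p \<and> p < b \<and> b < q)"
    and rays: "\<And>a b p. chord n T a b \<Longrightarrow> ray n T p \<Longrightarrow> \<not> (a < p \<and> p < b)"
  shows "noncrossing n T"
  unfolding noncrossing_lifts
proof (intro ballI)
  note lift_iff = lift_Fin_Fin_iff[OF assms(1,2)] lift_Fin_Inf_iff[OF assms(1,2)]
  fix P Q assume P: "P \<in> lifts n T" and Q: "Q \<in> lifts n T"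
  show "\<not> lcross P Q"
  proof (cases rule: lifts_cases[OF P])
    case (1 a b)
    then have ab: "chord n T a b" using P lift_iff by simp
    show ?thesis
    proof (cases rule: lifts_cases[OF Q])
      case (1 p q)
      then have pq: "chord n T p q" using Q lift_iff by simp
      show ?thesis
        using chords[OF ab pq] chords[OF pq ab] \<open>P = (Fin a, Fin b)\<close> 1 by auto
    next
      case (2 p)
      then have "ray n T p" using Q lift_iff by simp
      then show ?thesis using rays[OF ab] \<open>P = (Fin a, Fin b)\<close> 2 by auto
    qed
  next
    case (2 p)
    then have p: "ray n T p" using P lift_iff by simp
    show ?thesis
    proof (cases rule: lifts_cases[OF Q])
      case (1 a b)
      then have "chord n T a b" using Q lift_iff by simp
      then show ?thesis using rays[OF \<open>chord n T a b\<close> p] \<open>P = (Fin p, Inf)\<close> 1 by auto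
    qed (use 2 in simp)
  qed
qed

section \<open>Faces\<close>

definition side :: "nat \<Rightarrow> arc set \<Rightarrow> int \<Rightarrow> int \<Rightarrow> bool" where
  "side n T x y \<longleftrightarrow> y = x + 1 \<or> chord n T x y"

definition closed_face :: "nat \<Rightarrow> arc set \<Rightarrow> int list \<Rightarrow> bool" where
  "closed_face n T ys \<longleftrightarrow> 3 \<le> length ys \<and> sorted_wrt (<) ys \<and>
     (\<forall>i. i + 1 < length ys \<longrightarrow> side n T (ys ! i) (ys ! (i + 1))) \<and>
     side n T (hd ys) (last ys) \<and>
     (\<forall>i j. i + 1 < j \<and> j < length ys \<and> \<not> (i = 0 \<and> j = length ys - 1) \<longrightarrow>
        \<not> chord n T (ys ! i) (ys ! j))"

definition puncture_face :: "nat \<Rightarrow> arc set \<Rightarrow> int list \<Rightarrow> bool" where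
  "puncture_face n T ys \<longleftrightarrow> 2 \<le> length ys \<and> sorted_wrt (<) ys \<and>
     (\<forall>i. i + 1 < length ys \<longrightarrow> side n T (ys ! i) (ys ! (i + 1))) \<and>
     ray n T (hd ys) \<and> ray n T (last ys) \<and>
     (\<forall>i j. i + 1 < j \<and> j < length ys \<longrightarrow> \<not> chord n T (ys ! i) (ys ! j)) \<and>
     (\<forall>i. 0 < i \<and> i + 1 < length ys \<longrightarrow> \<not> ray n T (ys ! i))"

lemma sorted_lv_less_cases:
  assumes "sorted_wrt lv_less xs"
  obtains ys where "xs = map Fin ys" | ys where "xs = map Fin ys @ [Inf]"
  using assms
proof (induction xs arbitrary: thesis)
  case (Cons x xs)
  show ?case
  proof (cases x)
    case (Fin a)
    from Cons.IH show ?thesis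
    proof cases
      case (1 ys)
      then show ?thesis using Cons.prems(1)[of "a # ys"] Fin by simp
    next
      case (2 ys)
      then show ?thesis using Cons.prems(2)[of "a # ys"] Fin by simp
    qed (use Cons.prems in simp)
  next
    case Inf
    then have "xs = []" using Cons.prems(3) by (cases xs) auto
    then show ?thesis using Cons.prems(2)[of "[]"] Inf by simp
  qed
qed simp

lemma is_side_Fin_Fin_iff:
  "valid_arcs n T \<Longrightarrow> 0 < n \<Longrightarrow> is_side n T (Fin x) (Fin y) \<longleftrightarrow> side n T x y"
  unfolding is_side_def side_def using lift_Fin_Fin_iff by auto

lemma is_side_Fin_Inf_iff:
  "valid_arcs n T \<Longrightarrow> 0 < n \<Longrightarrow> is_side n T (Fin x) Inf \<longleftrightarrow> ray n T x"
  unfolding is_side_def using lift_Fin_Inf_iff by auto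

lemma is_face_map_Fin_iff:
  assumes "valid_arcs n T" "0 < n"
  shows "is_face n T (map Fin ys) \<longleftrightarrow> closed_face n T ys"
proof -
  note iffs = is_side_Fin_Fin_iff[OF assms] lift_Fin_Fin_iff[OF assms]
  have "sorted_wrt lv_less (map Fin ys) \<longleftrightarrow> sorted_wrt (<) ys"
    by (simp add: sorted_wrt_map)
  moreover have "ys \<noteq> [] \<Longrightarrow>
      is_side n T (hd (map Fin ys)) (last (map Fin ys)) \<longleftrightarrow> side n T (hd ys) (last ys)"
    using iffs by (simp add: hd_map last_map)
  ultimately show ?thesis
    unfolding is_face_def closed_face_def using iffs by (cases "ys = []") auto
qed

lemma map_Fin_append_Inf_nth:
  "i < length ys \<Longrightarrow> (map Fin ys @ [Inf]) ! i = Fin (ys ! i)"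
  "(map Fin ys @ [Inf]) ! length ys = Inf"
  by (simp_all add: nth_append)

lemma sides_append_Inf_iff:
  fixes ys :: "int list"
  assumes "valid_arcs n T" "0 < n"
  defines "xs \<equiv> map Fin ys @ [Inf]"
  shows "(\<forall>i. i + 1 < length xs \<longrightarrow> is_side n T (xs ! i) (xs ! (i + 1))) \<longleftrightarrow>
    (\<forall>i. i + 1 < length ys \<longrightarrow> side n T (ys ! i) (ys ! (i + 1))) \<and> (ys \<noteq> [] \<longrightarrow> ray n T (last ys))"
proof (intro iffI conjI allI impI)
  assume sides: "\<forall>i. i + 1 < length xs \<longrightarrow> is_side n T (xs ! i) (xs ! (i + 1))"
  fix i
  show "side n T (ys ! i) (ys ! (i + 1))" if "i + 1 < length ys"
    using that sides[rule_format, of i] is_side_Fin_Fin_iff[OF assms(1,2)]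
    by (simp add: xs_def map_Fin_append_Inf_nth)
next
  assume sides: "\<forall>i. i + 1 < length xs \<longrightarrow> is_side n T (xs ! i) (xs ! (i + 1))" and "ys \<noteq> []"
  then have "is_side n T (xs ! (length ys - 1)) (xs ! length ys)"
    using sides[rule_format, of "length ys - 1"] by (simp add: xs_def)
  then show "ray n T (last ys)"
    using \<open>ys \<noteq> []\<close> is_side_Fin_Inf_iff[OF assms(1,2)]
    by (simp add: xs_def map_Fin_append_Inf_nth last_conv_nth)
next
  fix i
  assume ys: "(\<forall>i. i + 1 < length ys \<longrightarrow> side n T (ys ! i) (ys ! (i + 1))) \<and> (ys \<noteq> [] \<longrightarrow> ray n T (last ys))"
    and i: "i + 1 < length xs"
  show "is_side n T (xs ! i) (xs ! (i + 1))"
  proof (cases "i + 1 < length ys")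
    case True
    then show ?thesis using ys is_side_Fin_Fin_iff[OF assms(1,2)]
      by (simp add: xs_def map_Fin_append_Inf_nth)
  next
    case False
    then have "i = length ys - 1" "ys \<noteq> []" using i by (auto simp: xs_def)
    then show ?thesis using ys is_side_Fin_Inf_iff[OF assms(1,2)]
      by (simp add: xs_def map_Fin_append_Inf_nth last_conv_nth)
  qed
qed

lemma nonadjacent_append_Inf_iff:
  fixes ys :: "int list"
  assumes "valid_arcs n T" "0 < n"
  defines "xs \<equiv> map Fin ys @ [Inf]"
  shows "(\<forall>i j. i + 1 < j \<and> j < length xs \<and> \<not> (i = 0 \<and> j = length xs - 1)
        \<longrightarrow> (xs ! i, xs ! j) \<notin> lifts n T) \<longleftrightarrow>
      (\<forall>i j. i + 1 < j \<and> j < length ys \<longrightarrow> \<not> chord n T (ys ! i) (ys ! j)) \<and>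
      (\<forall>i. 0 < i \<and> i + 1 < length ys \<longrightarrow> \<not> ray n T (ys ! i))"
proof (intro iffI conjI allI impI)
  assume nonadj: "\<forall>i j. i + 1 < j \<and> j < length xs \<and> \<not> (i = 0 \<and> j = length xs - 1)
        \<longrightarrow> (xs ! i, xs ! j) \<notin> lifts n T"
  fix i j
  show "\<not> chord n T (ys ! i) (ys ! j)" if "i + 1 < j \<and> j < length ys"
    using that nonadj[rule_format, of i j] lift_Fin_Fin_iff[OF assms(1,2)]
    by (simp add: xs_def map_Fin_append_Inf_nth)
  show "\<not> ray n T (ys ! i)" if "0 < i \<and> i + 1 < length ys"
    using that nonadj[rule_format, of i "length ys"] lift_Fin_Inf_iff[OF assms(1,2)]
    by (simp add: xs_def map_Fin_append_Inf_nth)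
next
  fix i j
  assume ys: "(\<forall>i j. i + 1 < j \<and> j < length ys \<longrightarrow> \<not> chord n T (ys ! i) (ys ! j)) \<and>
      (\<forall>i. 0 < i \<and> i + 1 < length ys \<longrightarrow> \<not> ray n T (ys ! i))"
    and ij: "i + 1 < j \<and> j < length xs \<and> \<not> (i = 0 \<and> j = length xs - 1)"
  show "(xs ! i, xs ! j) \<notin> lifts n T"
  proof (cases "j < length ys")
    case True
    then show ?thesis using ys ij lift_Fin_Fin_iff[OF assms(1,2)]
      by (simp add: xs_def map_Fin_append_Inf_nth)
  next
    case False
    then have "j = length ys" using ij by (simp add: xs_def)
    then show ?thesis using ys ij lift_Fin_Inf_iff[OF assms(1,2)]
      by (simp add: xs_def map_Fin_append_Inf_nth)
  qed
qed

lemma is_face_append_Inf_iff: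
  assumes "valid_arcs n T" "0 < n"
  shows "is_face n T (map Fin ys @ [Inf]) \<longleftrightarrow> puncture_face n T ys"
proof -
  have "ys \<noteq> [] \<Longrightarrow>
      is_side n T (hd (map Fin ys @ [Inf])) (last (map Fin ys @ [Inf])) \<longleftrightarrow> ray n T (hd ys)"
    using is_side_Fin_Inf_iff[OF assms] by (cases ys) auto
  then show ?thesis
    unfolding is_face_def sides_append_Inf_iff[OF assms] nonadjacent_append_Inf_iff[OF assms]
      puncture_face_def
    by (cases "ys = []") (auto simp: sorted_wrt_append sorted_wrt_map)
qed

definition arcs_above :: "nat \<Rightarrow> arc set \<Rightarrow> int \<Rightarrow> int \<Rightarrow> nat" where
  "arcs_above n T x y = (if ray n T x then 1 else 0) + card {q. chord n T x q \<and> y < q}"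
  \<comment> \<open>a ray ends at the puncture Inf, above every y\<close>

definition out_degree :: "nat \<Rightarrow> arc set \<Rightarrow> int \<Rightarrow> nat" where
  "out_degree n T x = (if ray n T x then 1 else 0) + card {q. chord n T x q}"

lemma finite_chords_from:
  assumes "valid_arcs n T"
  shows "finite {q. chord n T x q \<and> P q}"
proof (rule finite_subset)
  show "{q. chord n T x q \<and> P q} \<subseteq> {x..x + int n}"
    using chord_length[OF assms] by fastforce
qed simp

lemma arcs_above_Suc:
  assumes "valid_arcs n T"
  shows "arcs_above n T x (x + 1) = out_degree n T x"
proof -
  have "{q. chord n T x q \<and> x + 1 < q} = {q. chord n T x q}"
    using chord_length[OF assms] by force
  then show ?thesis unfolding arcs_above_def out_degree_def by simp
qed

lemma arcs_above_less_out_degree: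
  assumes "valid_arcs n T" "chord n T a b"
  shows "arcs_above n T a b < out_degree n T a"
proof -
  have "{q. chord n T a q \<and> b < q} \<subset> {q. chord n T a q}" using assms(2) by auto
  then have "card {q. chord n T a q \<and> b < q} < card {q. chord n T a q}"
    using finite_chords_from[OF assms(1), of a "\<lambda>_. True"] by (intro psubset_card_mono) simp_all
  then show ?thesis unfolding arcs_above_def out_degree_def by simp
qed

lemma chord_lands_on_vertex:
  assumes "valid_arcs n T" "0 < n" "noncrossing n T" and sorted: "sorted_wrt (<) ys"
    and sides: "\<forall>i. i + 1 < length ys \<longrightarrow> side n T (ys ! i) (ys ! (i + 1))"
    and t: "t + 1 < length ys" and q: "chord n T (ys ! t) q" "ys ! (t + 1) < q" "q \<le> last ys"
  shows "\<exists>j. t + 1 < j \<and> j < length ys \<and> q = ys ! j"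
proof (cases "q \<in> set ys")
  case True
  then obtain j where "j < length ys" "q = ys ! j" by (auto simp: in_set_conv_nth)
  moreover from this have "t + 1 < j"
    using q(2) strict_sorted_nth_less_iff[OF sorted] t by auto
  ultimately show ?thesis by blast
next
  case False
  have ne: "ys \<noteq> []" using t by auto
  then have "hd ys \<le> q"
    using q(2) sorted_wrt_nth_less[OF sorted, of 0 "t + 1"] t by (auto simp: hd_conv_nth)
  with False obtain s where s: "s + 1 < length ys" "ys ! s < q" "q < ys ! (s + 1)"
    using consecutive_around[OF ne, of q] q(3) by auto
  have "ys ! (t + 1) < ys ! (s + 1)" using s(3) q(2) by simp
  then have "t < s" using strict_sorted_nth_less_iff[OF sorted t s(1)] by simp
  then have "ys ! t < ys ! s" using sorted_wrt_nth_less[OF sorted] s(1) by simp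
  moreover have "chord n T (ys ! s) (ys ! (s + 1))"
    using sides s unfolding side_def by auto
  ultimately show ?thesis
    using noncrossing_chords[OF assms(3,1,2) q(1)] s by auto
qed

lemma closed_face_chord:
  assumes "closed_face n T ys"
  shows "chord n T (hd ys) (last ys)"
proof -
  have sorted: "sorted_wrt (<) ys" and len: "3 \<le> length ys"
    using assms unfolding closed_face_def by auto
  then have "ys ! 0 < ys ! 1" "ys ! 1 < ys ! (length ys - 1)"
    using sorted_wrt_nth_less[OF sorted] by auto
  moreover have "ys \<noteq> []" using len by auto
  ultimately have "last ys \<noteq> hd ys + 1" by (auto simp: hd_conv_nth last_conv_nth)
  then show ?thesis using assms unfolding closed_face_def side_def by auto
qed

lemma closed_face_first_arcs_above:
  assumes valid: "valid_arcs n T" "0 < n" and nc: "noncrossing n T" and face: "closed_face n T ys"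
  shows "arcs_above n T (ys ! 0) (ys ! 1) = arcs_above n T (hd ys) (last ys) + 1"
proof -
  have sorted: "sorted_wrt (<) ys" and len: "3 \<le> length ys"
    and sides: "\<forall>i. i + 1 < length ys \<longrightarrow> side n T (ys ! i) (ys ! (i + 1))"
    and nonadj: "\<And>j. 1 < j \<Longrightarrow> j < length ys - 1 \<Longrightarrow> \<not> chord n T (ys ! 0) (ys ! j)"
    using face unfolding closed_face_def by auto
  have "ys \<noteq> []" using len by auto
  then have hd: "hd ys = ys ! 0" and last: "last ys = ys ! (length ys - 1)"
    by (simp_all add: hd_conv_nth last_conv_nth)
  have top: "chord n T (ys ! 0) (last ys)" using closed_face_chord[OF face] hd by simp
  have "{q. chord n T (ys ! 0) q \<and> ys ! 1 < q} =
      insert (last ys) {q. chord n T (ys ! 0) q \<and> last ys < q}"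
  proof (intro equalityI subsetI)
    fix q assume "q \<in> {q. chord n T (ys ! 0) q \<and> ys ! 1 < q}"
    then have q: "chord n T (ys ! 0) q" "ys ! 1 < q" by auto
    show "q \<in> insert (last ys) {q. chord n T (ys ! 0) q \<and> last ys < q}"
    proof (cases "last ys < q")
      case False
      then obtain j where "1 < j" "j < length ys" "q = ys ! j"
        using chord_lands_on_vertex[OF valid nc sorted sides, of 0 q] q len by auto
      then show ?thesis using nonadj[of j] q last by (cases "j = length ys - 1") auto
    qed (use q in simp)
  next
    fix q assume "q \<in> insert (last ys) {q. chord n T (ys ! 0) q \<and> last ys < q}"
    moreover have "ys ! 1 < last ys" using sorted_wrt_nth_less[OF sorted, of 1] len last by simp
    ultimately show "q \<in> {q. chord n T (ys ! 0) q \<and> ys ! 1 < q}" using top by auto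
  qed
  then show ?thesis
    unfolding arcs_above_def hd using finite_chords_from[OF valid(1)] by simp
qed

lemma closed_face_inner_arcs_above:
  assumes valid: "valid_arcs n T" "0 < n" and nc: "noncrossing n T" and face: "closed_face n T ys"
    and t: "1 \<le> t" "t + 1 < length ys"
  shows "arcs_above n T (ys ! t) (ys ! (t + 1)) = 0"
proof -
  have sorted: "sorted_wrt (<) ys"
    and sides: "\<forall>i. i + 1 < length ys \<longrightarrow> side n T (ys ! i) (ys ! (i + 1))"
    and nonadj: "\<And>j. t + 1 < j \<Longrightarrow> j < length ys \<Longrightarrow> \<not> chord n T (ys ! t) (ys ! j)"
    using face t unfolding closed_face_def by auto
  have "last ys = ys ! (length ys - 1)" using t by (intro last_conv_nth) auto
  then have inside: "ys ! 0 < ys ! t" "ys ! t < last ys"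
    using sorted_wrt_nth_less[OF sorted] t by auto
  have "hd ys = ys ! 0" using t by (intro hd_conv_nth) auto
  then have top: "chord n T (ys ! 0) (last ys)" using closed_face_chord[OF face] by simp
  then have no_ray: "\<not> ray n T (ys ! t)" using noncrossing_chord_ray[OF nc valid] inside by blast
  have no_chord: "{q. chord n T (ys ! t) q \<and> ys ! (t + 1) < q} = {}"
  proof (intro equals0I)
    fix q assume "q \<in> {q. chord n T (ys ! t) q \<and> ys ! (t + 1) < q}"
    then have q: "chord n T (ys ! t) q" "ys ! (t + 1) < q" by simp_all
    show False
    proof (cases "last ys < q")
      case True
      then show False using noncrossing_chords[OF nc valid top q(1)] inside by auto
    next
      case False
      then show False using chord_lands_on_vertex[OF valid nc sorted sides t(2) q] nonadj q(1) by auto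
    qed
  qed
  show ?thesis using no_ray unfolding arcs_above_def no_chord by simp
qed

lemma puncture_face_arcs_above:
  assumes valid: "valid_arcs n T" "0 < n" and nc: "noncrossing n T" and face: "puncture_face n T ys"
  shows "arcs_above n T (ys ! 0) (ys ! 1) = 1"
    and "\<And>t. 1 \<le> t \<Longrightarrow> t + 1 < length ys \<Longrightarrow> arcs_above n T (ys ! t) (ys ! (t + 1)) = 0"
proof -
  have sorted: "sorted_wrt (<) ys" and len: "2 \<le> length ys"
    and sides: "\<forall>i. i + 1 < length ys \<longrightarrow> side n T (ys ! i) (ys ! (i + 1))"
    and nonadj: "\<And>i j. i + 1 < j \<Longrightarrow> j < length ys \<Longrightarrow> \<not> chord n T (ys ! i) (ys ! j)"
    and inner: "\<And>i. 0 < i \<Longrightarrow> i + 1 < length ys \<Longrightarrow> \<not> ray n T (ys ! i)"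
    and first: "ray n T (hd ys)" and last: "ray n T (last ys)"
    using face unfolding puncture_face_def by auto
  have no_chord: "{q. chord n T (ys ! t) q \<and> ys ! (t + 1) < q} = {}" if t: "t + 1 < length ys" for t
  proof (intro equals0I)
    fix q assume "q \<in> {q. chord n T (ys ! t) q \<and> ys ! (t + 1) < q}"
    then have q: "chord n T (ys ! t) q \<and> ys ! (t + 1) < q" by simp
    show False
    proof (cases "last ys < q")
      case True
      have "last ys = ys ! (length ys - 1)" using t by (intro last_conv_nth) auto
      then have "ys ! t < last ys"
        using sorted_wrt_nth_less[OF sorted, of t "length ys - 1"] t by simp
      then show False using noncrossing_chord_ray[OF nc valid _ last] q True by auto
    next
      case False
      then show False
        using chord_lands_on_vertex[OF valid nc sorted sides t, of q] nonadj q by auto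
    qed
  qed
  show "arcs_above n T (ys ! 0) (ys ! 1) = 1"
  proof -
    have "hd ys = ys ! 0" using len by (intro hd_conv_nth) auto
    moreover have none: "{q. chord n T (ys ! 0) q \<and> ys ! 1 < q} = {}"
      using no_chord[of 0] len by simp
    ultimately show ?thesis using first unfolding arcs_above_def none by simp
  qed
  fix t assume "1 \<le> t" "t + 1 < length ys"
  then have none: "{q. chord n T (ys ! t) q \<and> ys ! (t + 1) < q} = {}" using no_chord by simp
  show "arcs_above n T (ys ! t) (ys ! (t + 1)) = 0"
    using inner[of t] \<open>1 \<le> t\<close> \<open>t + 1 < length ys\<close> unfolding arcs_above_def none by simp
qed

lemma closed_face_height:
  assumes "valid_arcs n T" "0 < n" "noncrossing n T" "closed_face n T ys"
    and step: "\<And>s. s + 1 < length ys \<Longrightarrow>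
      H (ys ! (s + 1)) = H (ys ! s) - 1 + int m * int (arcs_above n T (ys ! s) (ys ! (s + 1)))"
    and t: "1 \<le> t" "t < length ys"
  shows "H (ys ! t) = H (hd ys) - int t + int m * (int (arcs_above n T (hd ys) (last ys)) + 1)"
proof -
  have "H (ys ! t) = H (ys ! 0) - int t + int m * int (arcs_above n T (ys ! 0) (ys ! 1))"
    using telescope_after_first[where w = "\<lambda>s. H (ys ! s)", OF step _ t]
      closed_face_inner_arcs_above[OF assms(1-4)] by simp
  moreover have "hd ys = ys ! 0" using t by (intro hd_conv_nth) auto
  ultimately show ?thesis using closed_face_first_arcs_above[OF assms(1-4)] by simp
qed

lemma puncture_face_height:
  assumes "valid_arcs n T" "0 < n" "noncrossing n T" "puncture_face n T ys"
    and step: "\<And>s. s + 1 < length ys \<Longrightarrow>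
      H (ys ! (s + 1)) = H (ys ! s) - 1 + int m * int (arcs_above n T (ys ! s) (ys ! (s + 1)))"
    and t: "1 \<le> t" "t < length ys"
  shows "H (ys ! t) = H (hd ys) - int t + int m"
proof -
  note above = puncture_face_arcs_above[OF assms(1-4)]
  have "H (ys ! t) = H (ys ! 0) - int t + int m * int (arcs_above n T (ys ! 0) (ys ! 1))"
    using telescope_after_first[where w = "\<lambda>s. H (ys ! s)", OF step _ t] above(2) by simp
  moreover have "hd ys = ys ! 0" using t by (intro hd_conv_nth) auto
  ultimately show ?thesis using above(1) by simp
qed

section \<open>Start points and the height function\<close>

fun start :: "arc \<Rightarrow> nat" where
  "start (Punct i) = i"
| "start (Bdry i d) = i"

definition start_points :: "arc set \<Rightarrow> nat multiset" where
  "start_points T = image_mset start (mset_set T)"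

lemma size_start_points: "size (start_points T) = card T"
  unfolding start_points_def by simp

lemma set_start_points:
  assumes "valid_arcs n T"
  shows "set_mset (start_points T) \<subseteq> {..<n}"
proof
  fix i assume "i \<in># start_points T"
  then obtain \<alpha> where "\<alpha> \<in> T" "i = start \<alpha>"
    unfolding start_points_def using finite_valid_arcs[OF assms] by auto
  then show "i \<in> {..<n}" using assms unfolding valid_arc_def by (cases \<alpha>) auto
qed

lemma arcs_starting_at:
  fixes x :: int
  assumes "valid_arcs n T"
  defines "i \<equiv> nat (x mod int n)"
  shows "{\<alpha> \<in> T. start \<alpha> = i} = ({Punct i} \<inter> T) \<union> (\<lambda>q. Bdry i (nat (q - x))) ` {q. chord n T x q}"
proof (intro equalityI subsetI)
  fix \<alpha> assume \<alpha>: "\<alpha> \<in> {\<alpha> \<in> T. start \<alpha> = i}"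
  show "\<alpha> \<in> ({Punct i} \<inter> T) \<union> (\<lambda>q. Bdry i (nat (q - x))) ` {q. chord n T x q}"
  proof (cases \<alpha>)
    case (Bdry j d)
    then have "2 \<le> d" "j = i" using \<alpha> assms(1) unfolding valid_arc_def by auto
    then have "chord n T x (x + int d)" "\<alpha> = Bdry i (nat (x + int d - x))"
      using \<alpha> Bdry unfolding chord_def i_def by auto
    then show ?thesis by blast
  qed (use \<alpha> in auto)
qed (auto simp: chord_def i_def)

lemma count_start_points:
  assumes valid: "valid_arcs n T"
  shows "count (start_points T) (nat (x mod int n)) = out_degree n T x"
proof -
  define i where "i = nat (x mod int n)"
  have "inj_on (\<lambda>q. Bdry i (nat (q - x))) {q. chord n T x q}"
    by (rule inj_onI) (auto simp: chord_def)
  then have "card ((\<lambda>q. Bdry i (nat (q - x))) ` {q. chord n T x q}) = card {q. chord n T x q}"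
    by (rule card_image)
  moreover have "finite {q. chord n T x q}" using finite_chords_from[OF valid, of x "\<lambda>_. True"] by simp
  moreover have "card ({Punct i} \<inter> T) = (if ray n T x then 1 else 0)"
    unfolding ray_def i_def by auto
  ultimately have "card {\<alpha> \<in> T. start \<alpha> = i} = out_degree n T x"
    unfolding arcs_starting_at[OF valid, of x, folded i_def] out_degree_def
    by (subst card_Un_disjoint) auto
  moreover have "count (start_points T) i = card {\<alpha> \<in> T. start \<alpha> = i}"
    unfolding start_points_def using finite_valid_arcs[OF valid]
    by (simp add: count_image_mset vimage_def Int_def conj_commute)
  ultimately show ?thesis unfolding i_def by simp
qed

definition height :: "nat \<Rightarrow> nat \<Rightarrow> nat multiset \<Rightarrow> int \<Rightarrow> int" where
  "height n m M = prefix_sum (\<lambda>x. int m * int (count M (nat (x mod int n))) - 1)"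

lemma height_Suc:
  "height n m M (x + 1) = height n m M x - 1 + int m * int (count M (nat (x mod int n)))"
  unfolding height_def prefix_sum_Suc by simp

lemma height_Suc_ge: "height n m M x - 1 \<le> height n m M (x + 1)"
  unfolding height_Suc by simp

lemma height_add_period:
  assumes "set_mset M \<subseteq> {..<n}"
  shows "height n m M (x + int n) = height n m M x + (int m * int (size M) - int n)"
proof -
  have "size M = (\<Sum>i<n. count M i)"
    unfolding size_multiset_overloaded_eq
    by (rule sum.mono_neutral_left) (use assms in \<open>auto simp: count_eq_zero_iff\<close>)
  then have "height n m M (int n) = int m * int (size M) - int n"
    unfolding height_def prefix_sum_of_nat
    by (simp add: sum_subtractf sum_distrib_left)
  then show ?thesis
    unfolding height_def by (subst prefix_sum_add_period) simp_all
qed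

lemma height_periodic:
  assumes "set_mset M \<subseteq> {..<n}" "n = m * size M"
  shows "height n m M (x + j * int n) = height n m M x"
proof -
  have "int m * int (size M) - int n = 0" using assms(2) by simp
  then have "height n m M (0 + int n) = height n m M 0"
    using height_add_period[OF assms(1), of m 0] by simp
  then show ?thesis
    unfolding height_def by (intro prefix_sum_periodic) (simp_all add: prefix_sum_def)
qed

lemma height_start_points_Suc:
  assumes "valid_arcs n T"
  shows "height n m (start_points T) (x + 1) =
    height n m (start_points T) x - 1 + int m * int (arcs_above n T x (x + 1))"
  unfolding height_Suc count_start_points[OF assms] arcs_above_Suc[OF assms] ..

section \<open>The angulation with prescribed start points\<close>

lemma card_less_except_zero:
  "card {k::nat. k < a \<and> \<not> (k = 0 \<and> P)} = (if P \<and> 0 < a then a - 1 else a)"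
proof (cases P)
  case True
  then have "{k::nat. k < a \<and> \<not> (k = 0 \<and> P)} = {1..<a}" by auto
  then show ?thesis using True by auto
qed simp

locale multiset_arcs =
  fixes n m :: nat and M :: "nat multiset"
  assumes n_pos: "0 < n" and m_pos: "1 \<le> m"
    and set_M: "set_mset M \<subseteq> {..<n}" and size_M: "n = m * size M"
begin

abbreviation h :: "int \<Rightarrow> int" where "h \<equiv> height n m M"

definition deg :: "int \<Rightarrow> nat" where "deg x = count M (nat (x mod int n))"

definition h_min :: int where "h_min = Min (h ` {0..<int n})"

definition level :: "int \<Rightarrow> nat \<Rightarrow> int" where "level x k = h x - 1 + int m * int k"

definition endpoint :: "int \<Rightarrow> nat \<Rightarrow> int" where "endpoint x k = first_below h x (level x k)"

definition chord_index :: "int \<Rightarrow> nat \<Rightarrow> bool" where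
  "chord_index x k \<longleftrightarrow> k < deg x \<and> \<not> (k = 0 \<and> h x = h_min)"

definition arc_at :: "nat \<Rightarrow> nat \<Rightarrow> arc" where
  "arc_at i k =
    (if k = 0 \<and> h (int i) = h_min then Punct i else Bdry i (nat (endpoint (int i) k - int i)))"

definition arcs :: "arc set" where
  "arcs = {arc_at i k | i k. i < n \<and> k < count M i}"

lemma deg_shift: "deg (x + j * int n) = deg x"
  unfolding deg_def by simp

lemma deg_of_nat: "i < n \<Longrightarrow> deg (int i) = count M i"
  unfolding deg_def by simp

lemma h_Suc: "h (x + 1) = h x - 1 + int m * int (deg x)"
  unfolding deg_def by (rule height_Suc)

lemma h_shift: "h (x + j * int n) = h x"
  using height_periodic[OF set_M size_M] .

lemma h_min_le: "h_min \<le> h y"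
proof -
  have "h_min \<le> h (y mod int n)"
    unfolding h_min_def using n_pos by (intro Min_le) auto
  also have "h (y mod int n) = h y"
    using h_shift[of "y mod int n" "y div int n"] by simp
  finally show ?thesis .
qed

lemma h_min_attained: "\<exists>x. h x = h_min"
proof -
  have "h_min \<in> h ` {0..<int n}" unfolding h_min_def using n_pos by (intro Min_in) auto
  then show ?thesis by auto
qed

lemma h_window: "\<exists>y'. x < y' \<and> y' \<le> x + int n \<and> h y' = h y"
proof -
  define r where "r = (y - x - 1) mod int n"
  have "y = (x + 1 + r) + ((y - x - 1) div int n) * int n"
    unfolding r_def by simp
  then have "h (x + 1 + r) = h y" using h_shift by metis
  moreover have "0 \<le> r" "r < int n" unfolding r_def using n_pos by simp_all
  ultimately show ?thesis by (intro exI[of _ "x + 1 + r"]) auto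
qed

lemma deg_pos_at_min: "h x = h_min \<Longrightarrow> 0 < deg x"
  using h_Suc[of x] h_min_le[of "x + 1"] by (cases "deg x") auto

lemma level_below_Suc: "k < deg x \<Longrightarrow> level x k < h (x + 1)"
  unfolding level_def h_Suc using m_pos by simp

lemma endpoint_props:
  assumes "chord_index x k"
  shows "x + 1 < endpoint x k" "endpoint x k \<le> x + int n" "h (endpoint x k) = level x k"
    "\<And>y. x < y \<Longrightarrow> y < endpoint x k \<Longrightarrow> level x k < h y"
proof -
  obtain b where b: "x < b" "b \<le> x + int n" "h b \<le> level x k"
  proof (cases "k = 0")
    case True
    then have "h_min < h x" using assms h_min_le[of x] unfolding chord_index_def by auto
    obtain y' where "x < y'" "y' \<le> x + int n" "h y' = h_min"
      using h_min_attained h_window by metis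
    then show ?thesis using that True \<open>h_min < h x\<close> unfolding level_def by simp
  next
    case False
    then have "h (x + int n) \<le> level x k"
      using h_shift[of x 1] m_pos unfolding level_def by simp
    then show ?thesis using that[of "x + int n"] n_pos by simp
  qed
  have below: "level x k < h (x + 1)" using assms level_below_Suc unfolding chord_index_def by simp
  note first = first_below_props[of h, OF height_Suc_ge b(1,3) below]
  show "x + 1 < endpoint x k" "h (endpoint x k) = level x k"
    "\<And>y. x < y \<Longrightarrow> y < endpoint x k \<Longrightarrow> level x k < h y"
    using first unfolding endpoint_def by auto
  show "endpoint x k \<le> x + int n"
    using first_below_le[of x b h "level x k"] b unfolding endpoint_def by simp
qed

lemma chord_index_shift: "chord_index (x + j * int n) k \<longleftrightarrow> chord_index x k"
  unfolding chord_index_def deg_shift h_shift ..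

lemma endpoint_shift:
  assumes "chord_index x k"
  shows "endpoint (x + j * int n) k = endpoint x k + j * int n"
proof -
  note e = endpoint_props[OF assms]
  have level: "level (x + j * int n) k = level x k" unfolding level_def h_shift ..
  have "first_below h (x + j * int n) (level x k) = endpoint x k + j * int n"
  proof (rule first_below_eqI)
    fix y assume "x + j * int n < y" "y < endpoint x k + j * int n"
    then have "level x k < h (y - j * int n)" using e(4)[of "y - j * int n"] by simp
    then show "level x k < h y" using h_shift[of "y - j * int n" j] by simp
  qed (use e h_shift in simp_all)
  then show ?thesis unfolding endpoint_def level .
qed

lemma endpoint_strict_antimono:
  assumes "k1 < k2" "k2 < deg x" "chord_index x k1"
  shows "endpoint x k2 < endpoint x k1"
proof -
  have "chord_index x k2" using assms unfolding chord_index_def by simp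
  note e1 = endpoint_props[OF assms(3)] and e2 = endpoint_props[OF this]
  have "level x k1 < level x k2" unfolding level_def using assms(1) m_pos by simp
  then have "endpoint x k2 \<le> endpoint x k1"
    unfolding endpoint_def[of x k2] using e1(1,3) by (intro first_below_le) auto
  moreover have "endpoint x k2 \<noteq> endpoint x k1"
    using e1(3) e2(3) \<open>level x k1 < level x k2\<close> by auto
  ultimately show ?thesis by simp
qed

lemma inj_on_endpoint: "inj_on (endpoint x) {k. chord_index x k}"
proof (rule linorder_inj_onI')
  fix k1 k2 assume "k1 \<in> {k. chord_index x k}" "k2 \<in> {k. chord_index x k}" "k1 < k2"
  then show "endpoint x k1 \<noteq> endpoint x k2"
    using endpoint_strict_antimono[of k1 k2 x] unfolding chord_index_def by simp
qed

lemma Punct_in_arcs_iff: "Punct i \<in> arcs \<longleftrightarrow> i < n \<and> 0 < count M i \<and> h (int i) = h_min"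
proof
  assume "Punct i \<in> arcs"
  then show "i < n \<and> 0 < count M i \<and> h (int i) = h_min"
    unfolding arcs_def arc_at_def by (auto split: if_splits)
next
  assume i: "i < n \<and> 0 < count M i \<and> h (int i) = h_min"
  then have "Punct i = arc_at i 0" unfolding arc_at_def by simp
  with i show "Punct i \<in> arcs" unfolding arcs_def by blast
qed

lemma Bdry_in_arcs_iff:
  assumes "i < n"
  shows "Bdry i d \<in> arcs \<longleftrightarrow> (\<exists>k. chord_index (int i) k \<and> d = nat (endpoint (int i) k - int i))"
proof
  assume "Bdry i d \<in> arcs"
  then show "\<exists>k. chord_index (int i) k \<and> d = nat (endpoint (int i) k - int i)"
    unfolding arcs_def arc_at_def chord_index_def using deg_of_nat by (auto split: if_splits)
next
  assume "\<exists>k. chord_index (int i) k \<and> d = nat (endpoint (int i) k - int i)"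
  then obtain k where k: "chord_index (int i) k" "d = nat (endpoint (int i) k - int i)" by blast
  then have "Bdry i d = arc_at i k" unfolding arc_at_def chord_index_def by simp
  moreover have "k < count M i" using k(1) deg_of_nat[OF assms] unfolding chord_index_def by simp
  ultimately show "Bdry i d \<in> arcs" using assms unfolding arcs_def by blast
qed

lemma ray_arcs_iff: "ray n arcs x \<longleftrightarrow> h x = h_min"
proof -
  let ?i = "nat (x mod int n)"
  have i: "?i < n" using n_pos by (simp add: nat_less_iff)
  have "h (int ?i) = h x" "count M ?i = deg x"
    using h_shift[of "x mod int n" "x div int n"] n_pos unfolding deg_def by simp_all
  then have "ray n arcs x \<longleftrightarrow> 0 < deg x \<and> h x = h_min"
    unfolding ray_def Punct_in_arcs_iff using i by simp
  then show ?thesis using deg_pos_at_min by blast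
qed

lemma chord_arcs_iff: "chord n arcs x y \<longleftrightarrow> (\<exists>k. chord_index x k \<and> y = endpoint x k)"
proof -
  define i j where "i = nat (x mod int n)" and "j = x div int n"
  have i: "i < n" using n_pos unfolding i_def by (simp add: nat_less_iff)
  have x: "x = int i + j * int n" using n_pos unfolding i_def j_def by simp
  have index: "chord_index (int i) k \<longleftrightarrow> chord_index x k" for k
    using chord_index_shift[of "int i" j] x by simp
  have shift: "endpoint (int i) k - int i = endpoint x k - x" if "chord_index x k" for k
    using endpoint_shift[of "int i" k j] that index x by simp
  have "chord n arcs x y \<longleftrightarrow>
      x < y \<and> (\<exists>k. chord_index (int i) k \<and> nat (y - x) = nat (endpoint (int i) k - int i))"
    unfolding chord_def i_def[symmetric] Bdry_in_arcs_iff[OF i] ..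
  also have "\<dots> \<longleftrightarrow> x < y \<and> (\<exists>k. chord_index x k \<and> nat (y - x) = nat (endpoint x k - x))"
    using index shift by auto
  also have "\<dots> \<longleftrightarrow> (\<exists>k. chord_index x k \<and> y = endpoint x k)"
  proof -
    have "x < y \<and> nat (y - x) = nat (endpoint x k - x) \<longleftrightarrow> y = endpoint x k" if "chord_index x k" for k
      using endpoint_props(1)[OF that] by auto
    then show ?thesis by blast
  qed
  finally show ?thesis .
qed

lemma finite_arcs: "finite arcs"
proof -
  have "arcs \<subseteq> (\<lambda>(i, k). arc_at i k) ` ({..<n} \<times> {..size M})"
  proof
    fix \<alpha> assume "\<alpha> \<in> arcs"
    then obtain i k where "\<alpha> = arc_at i k" "i < n" "k < count M i" unfolding arcs_def by blast
    moreover have "count M i \<le> size M" by (rule count_le_size)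
    ultimately show "\<alpha> \<in> (\<lambda>(i, k). arc_at i k) ` ({..<n} \<times> {..size M})" by force
  qed
  then show ?thesis by (rule finite_subset) simp
qed

lemma valid_arcs_arcs: "valid_arcs n arcs"
proof
  fix \<alpha> assume "\<alpha> \<in> arcs"
  then obtain i k where \<alpha>: "\<alpha> = arc_at i k" "i < n" "k < count M i" unfolding arcs_def by blast
  show "valid_arc n \<alpha>"
  proof (cases "k = 0 \<and> h (int i) = h_min")
    case False
    then have "chord_index (int i) k" using \<alpha> deg_of_nat unfolding chord_index_def by simp
    from endpoint_props(1,2)[OF this] show ?thesis
      using \<alpha> False unfolding arc_at_def valid_arc_def by auto
  qed (use \<alpha> in \<open>simp add: arc_at_def valid_arc_def\<close>)
qed

lemma out_degree_arcs: "out_degree n arcs x = deg x"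
proof -
  have "{q. chord n arcs x q} = endpoint x ` {k. chord_index x k}"
    unfolding chord_arcs_iff by auto
  then have "card {q. chord n arcs x q} = card {k. chord_index x k}"
    using card_image[OF inj_on_endpoint] by simp
  also have "\<dots> = (if h x = h_min then deg x - 1 else deg x)"
    unfolding chord_index_def card_less_except_zero using deg_pos_at_min by simp
  finally show ?thesis
    unfolding out_degree_def ray_arcs_iff using deg_pos_at_min[of x] by auto
qed

lemma arcs_above_endpoint:
  assumes "chord_index x k"
  shows "arcs_above n arcs x (endpoint x k) = k"
proof -
  have eq: "{q. chord n arcs x q \<and> endpoint x k < q} = endpoint x ` {k'. k' < k \<and> \<not> (k' = 0 \<and> h x = h_min)}"
  proof (intro equalityI subsetI)
    fix q assume "q \<in> {q. chord n arcs x q \<and> endpoint x k < q}"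
    then obtain k' where k': "chord_index x k'" "q = endpoint x k'" "endpoint x k < endpoint x k'"
      unfolding chord_arcs_iff by auto
    have "k' < k"
    proof (rule ccontr)
      assume "\<not> k' < k"
      then have "k < k'" using k'(3) by (cases "k = k'") auto
      then show False
        using endpoint_strict_antimono[of k k' x] assms k' unfolding chord_index_def by simp
    qed
    then show "q \<in> endpoint x ` {k'. k' < k \<and> \<not> (k' = 0 \<and> h x = h_min)}"
      using k' unfolding chord_index_def by auto
  next
    fix q assume "q \<in> endpoint x ` {k'. k' < k \<and> \<not> (k' = 0 \<and> h x = h_min)}"
    then obtain k' where k': "k' < k" "\<not> (k' = 0 \<and> h x = h_min)" "q = endpoint x k'" by auto
    then have "chord_index x k'" using assms unfolding chord_index_def by simp
    then have "chord n arcs x q" unfolding chord_arcs_iff using k'(3) by blast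
    moreover have "endpoint x k < q"
      using k' endpoint_strict_antimono[of k' k x] assms unfolding chord_index_def by simp
    ultimately show "q \<in> {q. chord n arcs x q \<and> endpoint x k < q}" by simp
  qed
  have "inj_on (endpoint x) {k'. k' < k \<and> \<not> (k' = 0 \<and> h x = h_min)}"
    using assms by (intro inj_on_subset[OF inj_on_endpoint]) (auto simp: chord_index_def)
  then have "card {q. chord n arcs x q \<and> endpoint x k < q} =
      card {k'. k' < k \<and> \<not> (k' = 0 \<and> h x = h_min)}"
    unfolding eq by (rule card_image)
  also have "\<dots> = (if h x = h_min \<and> 0 < k then k - 1 else k)"
    by (rule card_less_except_zero)
  finally have "card {q. chord n arcs x q \<and> endpoint x k < q} =
      (if h x = h_min \<and> 0 < k then k - 1 else k)" .
  then show ?thesis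
    using assms unfolding arcs_above_def ray_arcs_iff chord_index_def by auto
qed

lemma side_height:
  assumes "side n arcs x y"
  shows "h y = h x - 1 + int m * int (arcs_above n arcs x y)"
  using assms unfolding side_def
proof
  assume "y = x + 1"
  then show ?thesis
    using h_Suc out_degree_arcs arcs_above_Suc[OF valid_arcs_arcs] by simp
next
  assume "chord n arcs x y"
  then obtain k where "chord_index x k" "y = endpoint x k" unfolding chord_arcs_iff by blast
  then show ?thesis using endpoint_props(3) arcs_above_endpoint unfolding level_def by simp
qed

lemma noncrossing_arcs: "noncrossing n arcs"
proof (rule noncrossingI[OF valid_arcs_arcs n_pos])
  fix a b p q assume ab: "chord n arcs a b" and pq: "chord n arcs p q"
  show "\<not> (a < p \<and> p < b \<and> b < q)"
  proof
    assume order: "a < p \<and> p < b \<and> b < q"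
    obtain k where k: "chord_index a k" "b = endpoint a k" using ab chord_arcs_iff by auto
    obtain k' where k': "chord_index p k'" "q = endpoint p k'" using pq chord_arcs_iff by auto
    have "h b < h p" using endpoint_props(3)[OF k(1)] endpoint_props(4)[OF k(1), of p] order k(2) by simp
    moreover have "0 \<le> int m * int k'" by simp
    ultimately have "h b \<le> level p k'" unfolding level_def by linarith
    then have "q \<le> b" using first_below_le[of p b h] order k' unfolding endpoint_def by simp
    then show False using order by simp
  qed
next
  fix a b p assume ab: "chord n arcs a b" and "ray n arcs p"
  show "\<not> (a < p \<and> p < b)"
  proof
    assume order: "a < p \<and> p < b"
    obtain k where k: "chord_index a k" "b = endpoint a k" using ab chord_arcs_iff by auto
    have "h b < h p" using endpoint_props(3)[OF k(1)] endpoint_props(4)[OF k(1), of p] order k(2) by simp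
    then show False using \<open>ray n arcs p\<close> h_min_le[of b] unfolding ray_arcs_iff by simp
  qed
qed

lemma ray_in_arcs: "\<exists>i. Punct i \<in> arcs"
  using h_min_attained ray_arcs_iff unfolding ray_def by blast

lemma faces_arcs:
  assumes "is_face n arcs xs"
  shows "length xs = m + 2"
proof -
  note facts = valid_arcs_arcs n_pos noncrossing_arcs
  have step: "h (ys ! (s + 1)) = h (ys ! s) - 1 + int m * int (arcs_above n arcs (ys ! s) (ys ! (s + 1)))"
    if "\<forall>i. i + 1 < length ys \<longrightarrow> side n arcs (ys ! i) (ys ! (i + 1))" "s + 1 < length ys" for ys s
    using that side_height by blast
  have "sorted_wrt lv_less xs" using assms unfolding is_face_def by simp
  then show ?thesis
  proof (cases rule: sorted_lv_less_cases)
    case (1 ys)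
    then have face: "closed_face n arcs ys" using assms is_face_map_Fin_iff[OF facts(1,2)] by simp
    then have len: "3 \<le> length ys" and ne: "ys \<noteq> []" unfolding closed_face_def by auto
    have "h (last ys) = h (hd ys) - int (length ys - 1) +
        int m * (int (arcs_above n arcs (hd ys) (last ys)) + 1)"
      using closed_face_height[OF facts face step, of "length ys - 1"] face len
      unfolding closed_face_def last_conv_nth[OF ne] by simp
    moreover have "h (last ys) = h (hd ys) - 1 + int m * int (arcs_above n arcs (hd ys) (last ys))"
      using side_height closed_face_chord[OF face] unfolding side_def by blast
    ultimately have "int (length ys - 1) = int m + 1" by (simp add: algebra_simps)
    then show ?thesis using 1 len by simp
  next
    case (2 ys)
    then have face: "puncture_face n arcs ys" using assms is_face_append_Inf_iff[OF facts(1,2)] by simp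
    then have len: "2 \<le> length ys" and "ray n arcs (hd ys)" "ray n arcs (last ys)"
      unfolding puncture_face_def by auto
    then have "h (last ys) = h (hd ys)" and ne: "ys \<noteq> []" unfolding ray_arcs_iff by auto
    moreover have "h (last ys) = h (hd ys) - int (length ys - 1) + int m"
      using puncture_face_height[OF facts face step, of "length ys - 1"] face len
      unfolding puncture_face_def last_conv_nth[OF ne] by simp
    ultimately have "int (length ys - 1) = int m" by simp
    then show ?thesis using 2 len by simp
  qed
qed

lemma is_angulation_arcs: "is_angulation m n arcs"
  unfolding is_angulation_def using valid_arcs_arcs noncrossing_arcs ray_in_arcs faces_arcs by blast

lemma start_points_arcs: "start_points arcs = M"
proof (rule multiset_eqI)
  fix i
  show "count (start_points arcs) i = count M i"
  proof (cases "i < n")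
    case True
    then show ?thesis
      using count_start_points[OF valid_arcs_arcs, of "int i"] out_degree_arcs deg_of_nat by simp
  next
    case False
    then have "i \<notin># start_points arcs" "i \<notin># M"
      using set_start_points[OF valid_arcs_arcs] set_M by auto
    then show ?thesis by (simp add: not_in_iff)
  qed
qed

end

section \<open>The faces below a chord and between consecutive rays\<close>

lemma sorted_wrt_less_hd_le: "sorted_wrt (<) xs \<Longrightarrow> y \<in> set xs \<Longrightarrow> hd xs \<le> y"
  for xs :: "'a::linorder list"
  by (cases xs) auto

lemma sorted_wrt_less_le_last: "sorted_wrt (<) xs \<Longrightarrow> y \<in> set xs \<Longrightarrow> y \<le> last xs"
  for xs :: "'a::linorder list"
  by (induction xs) (auto simp: less_imp_le)

definition uncovered :: "int \<Rightarrow> int \<Rightarrow> (int \<times> int) set \<Rightarrow> int set" where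
  "uncovered a b C = {y. a \<le> y \<and> y \<le> b \<and> \<not> (\<exists>(p, q)\<in>C. p < y \<and> y < q)}"

definition face_vertices :: "int \<Rightarrow> int \<Rightarrow> (int \<times> int) set \<Rightarrow> int list" where
  "face_vertices a b C = sorted_list_of_set (uncovered a b C)"

locale nested_chords =
  fixes a b :: int and C :: "(int \<times> int) set"
  assumes less: "a < b" and finite_C: "finite C"
    and within: "\<And>p q. (p, q) \<in> C \<Longrightarrow> a \<le> p \<and> p < q \<and> q \<le> b"
    and nested: "\<And>p q p' q'. (p, q) \<in> C \<Longrightarrow> (p', q') \<in> C \<Longrightarrow> \<not> (p < p' \<and> p' < q \<and> q < q')"
begin

abbreviation ys :: "int list" where "ys \<equiv> face_vertices a b C"

lemma set_vertices: "set ys = uncovered a b C"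
proof -
  have "finite (uncovered a b C)"
    by (rule finite_subset[of _ "{a..b}"]) (auto simp: uncovered_def)
  then show ?thesis unfolding face_vertices_def by simp
qed

lemma sorted_vertices: "sorted_wrt (<) ys"
  unfolding face_vertices_def by (rule strict_sorted_list_of_set)

lemma ends_uncovered: "a \<in> uncovered a b C" "b \<in> uncovered a b C"
  unfolding uncovered_def using less within by force+

lemma vertex_bounds: "y \<in> set ys \<Longrightarrow> a \<le> y \<and> y \<le> b"
  unfolding set_vertices uncovered_def by auto

lemma vertices_ne: "ys \<noteq> []"
  using ends_uncovered set_vertices by auto

lemma hd_vertices: "hd ys = a"
  using sorted_wrt_less_hd_le[OF sorted_vertices] vertex_bounds[of "hd ys"] ends_uncovered(1)
    hd_in_set[OF vertices_ne] set_vertices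
  by (metis order_antisym)

lemma last_vertices: "last ys = b"
  using sorted_wrt_less_le_last[OF sorted_vertices] vertex_bounds[of "last ys"] ends_uncovered(2)
    last_in_set[OF vertices_ne] set_vertices
  by (metis order_antisym)

lemma nth_vertices_ends: "ys ! 0 = a" "ys ! (length ys - 1) = b"
  using hd_vertices last_vertices vertices_ne by (simp_all add: hd_conv_nth last_conv_nth)

lemma length_vertices: "2 \<le> length ys"
proof -
  have "{a, b} \<subseteq> set ys" using ends_uncovered set_vertices by auto
  then have "card {a, b} \<le> card (set ys)" by (intro card_mono) simp_all
  then show ?thesis using less card_length[of ys] by simp
qed

lemma outermost_chord_from:
  assumes "(x, q) \<in> C"
  obtains r where "(x, r) \<in> C" "\<And>q'. (x, q') \<in> C \<Longrightarrow> q' \<le> r"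
proof -
  define S where "S = {q. (x, q) \<in> C}"
  have "finite S" unfolding S_def
    by (rule finite_subset[of _ "snd ` C"]) (use finite_C in \<open>auto simp: image_iff\<close>, force)
  moreover have "q \<in> S" using assms unfolding S_def by simp
  ultimately have "Max S \<in> S" "\<And>q'. q' \<in> S \<Longrightarrow> q' \<le> Max S"
    by (auto intro!: Max_in Max_ge)
  then show ?thesis using that unfolding S_def by blast
qed

lemma gap_is_chord:
  assumes x: "x \<in> uncovered a b C" and y: "y \<in> uncovered a b C" and "x < y" "y \<noteq> x + 1"
    and gap: "\<And>v. v \<in> uncovered a b C \<Longrightarrow> \<not> (x < v \<and> v < y)"
  shows "(x, y) \<in> C"
proof -
  have x_free: "\<And>p q. (p, q) \<in> C \<Longrightarrow> \<not> (p < x \<and> x < q)"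
    and y_free: "\<And>p q. (p, q) \<in> C \<Longrightarrow> \<not> (p < y \<and> y < q)"
    using x y unfolding uncovered_def by auto
  have "a \<le> x" "y \<le> b" using x y unfolding uncovered_def by auto
  then have "x + 1 \<notin> uncovered a b C" "a \<le> x + 1" "x + 1 \<le> b"
    using gap[of "x + 1"] \<open>x < y\<close> \<open>y \<noteq> x + 1\<close> by auto
  then obtain p q where pq: "(p, q) \<in> C" "p < x + 1" "x + 1 < q"
    unfolding uncovered_def by auto
  then have "(x, q) \<in> C" using x_free[OF pq(1)] by auto
  then obtain r where top: "(x, r) \<in> C" "\<And>q'. (x, q') \<in> C \<Longrightarrow> q' \<le> r"
    using outermost_chord_from by blast
  have "r \<le> y" using y_free[OF top(1)] within[OF top(1)] \<open>x < y\<close> by force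
  moreover have "\<not> r < y"
  proof
    assume "r < y"
    moreover have "x < r" using within[OF top(1)] by simp
    ultimately obtain p' q' where pq': "(p', q') \<in> C" "p' < r" "r < q'"
      using gap[of r] \<open>a \<le> x\<close> \<open>y \<le> b\<close> unfolding uncovered_def by auto
    consider "p' < x" | "p' = x" | "x < p'" by linarith
    then show False
    proof cases
      case 1
      then show False using x_free[OF pq'(1)] pq' \<open>x < r\<close> by simp
    next
      case 2
      then show False using top(2)[of q'] pq' by simp
    next
      case 3
      then show False using nested[OF top(1) pq'(1)] pq' by simp
    qed
  qed
  ultimately show ?thesis using top(1) by simp
qed

lemma consecutive_vertices:
  assumes "i + 1 < length ys"
  shows "ys ! (i + 1) = ys ! i + 1 \<or> (ys ! i, ys ! (i + 1)) \<in> C"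
proof -
  have mem: "ys ! i \<in> uncovered a b C" "ys ! (i + 1) \<in> uncovered a b C"
    using assms set_vertices nth_mem by fastforce+
  have "\<not> (ys ! i < v \<and> v < ys ! (i + 1))" if "v \<in> uncovered a b C" for v
  proof
    assume v: "ys ! i < v \<and> v < ys ! (i + 1)"
    from that obtain j where j: "j < length ys" "ys ! j = v"
      using set_vertices by (metis in_set_conv_nth)
    have "i < j" "j < i + 1"
      using v j assms strict_sorted_nth_less_iff[OF sorted_vertices] by auto
    then show False by simp
  qed
  then show ?thesis
    using gap_is_chord[OF mem] sorted_wrt_nth_less[OF sorted_vertices, of i "i + 1"] assms by auto
qed

lemma nonadjacent_vertices:
  assumes "i + 1 < j" "j < length ys"
  shows "(ys ! i, ys ! j) \<notin> C"
proof
  assume "(ys ! i, ys ! j) \<in> C"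
  moreover have "ys ! (i + 1) \<in> uncovered a b C" using assms set_vertices nth_mem by fastforce
  moreover have "ys ! i < ys ! (i + 1)" "ys ! (i + 1) < ys ! j"
    using sorted_wrt_nth_less[OF sorted_vertices] assms by auto
  ultimately show False unfolding uncovered_def by auto
qed

lemma covered_by_side:
  assumes "a \<le> y" "y \<le> b" "y \<notin> set ys"
  obtains s where "s + 1 < length ys" "ys ! s < y" "y < ys ! (s + 1)" "(ys ! s, ys ! (s + 1)) \<in> C"
proof -
  obtain s where s: "s + 1 < length ys" "ys ! s < y" "y < ys ! (s + 1)"
    using consecutive_around[OF vertices_ne, of y] assms hd_vertices last_vertices by auto
  then have "(ys ! s, ys ! (s + 1)) \<in> C" using consecutive_vertices[OF s(1)] by auto
  with s that show ?thesis by blast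
qed

end

definition chords_within :: "nat \<Rightarrow> arc set \<Rightarrow> int \<Rightarrow> int \<Rightarrow> (int \<times> int) set" where
  "chords_within n T a b = {(p, q). chord n T p q \<and> a \<le> p \<and> q \<le> b}"

lemma nested_chords_within:
  assumes "valid_arcs n T" "0 < n" "noncrossing n T" "a < b" "C \<subseteq> chords_within n T a b"
  shows "nested_chords a b C"
proof
  show "finite C"
    by (rule finite_subset[of _ "{a..b} \<times> {a..b}"]) (use assms(5) in \<open>auto simp: chords_within_def chord_def\<close>)
  fix p q assume "(p, q) \<in> C"
  then show "a \<le> p \<and> p < q \<and> q \<le> b" using assms(5) by (auto simp: chords_within_def chord_def)
next
  fix p q p' q' assume "(p, q) \<in> C" "(p', q') \<in> C"
  then have "chord n T p q" "chord n T p' q'" using assms(5) by (auto simp: chords_within_def)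
  then show "\<not> (p < p' \<and> p' < q \<and> q < q')" by (rule noncrossing_chords[OF assms(3,1,2)])
qed (rule assms(4))

lemma closed_face_below_chord:
  assumes valid: "valid_arcs n T" "0 < n" and nc: "noncrossing n T" and ab: "chord n T a b"
  defines "C \<equiv> chords_within n T a b - {(a, b)}"
  shows "closed_face n T (face_vertices a b C)"
proof -
  have "a + 2 \<le> b" using chord_length[OF valid(1) ab] by simp
  then interpret nested_chords a b C
    by (intro nested_chords_within[OF valid nc]) (auto simp: C_def)
  have sides: "side n T (ys ! i) (ys ! (i + 1))" if "i + 1 < length ys" for i
    using consecutive_vertices[OF that] unfolding side_def C_def chords_within_def by auto
  have "length ys \<noteq> 2"
  proof
    assume "length ys = 2"
    then show False
      using consecutive_vertices[of 0] nth_vertices_ends \<open>a + 2 \<le> b\<close> unfolding C_def by auto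
  qed
  then have len: "3 \<le> length ys" using length_vertices by simp
  have "\<not> chord n T (ys ! i) (ys ! j)"
    if ij: "i + 1 < j" "j < length ys" "\<not> (i = 0 \<and> j = length ys - 1)" for i j
  proof
    assume ch: "chord n T (ys ! i) (ys ! j)"
    have "distinct ys" using sorted_vertices strict_sorted_iff by blast
    then have "ys ! i = a \<Longrightarrow> i = 0" "ys ! j = b \<Longrightarrow> j = length ys - 1"
      using nth_eq_iff_index_eq[of ys i 0] nth_eq_iff_index_eq[of ys j "length ys - 1"]
        ij(1,2) nth_vertices_ends vertices_ne by auto
    then have "(ys ! i, ys ! j) \<noteq> (a, b)" using ij(3) by auto
    moreover have "a \<le> ys ! i" "ys ! j \<le> b"
      using vertex_bounds[OF nth_mem] ij by (meson order.strict_trans less_add_one)+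
    ultimately have "(ys ! i, ys ! j) \<in> C" using ch unfolding C_def chords_within_def by auto
    then show False using nonadjacent_vertices ij by blast
  qed
  then show ?thesis
    unfolding closed_face_def using len sorted_vertices sides ab hd_vertices last_vertices
    by (auto simp: side_def)
qed

lemma puncture_face_between_rays:
  assumes valid: "valid_arcs n T" "0 < n" and nc: "noncrossing n T"
    and rays: "ray n T a" "ray n T b" "a < b" and no_ray: "\<And>y. a < y \<Longrightarrow> y < b \<Longrightarrow> \<not> ray n T y"
  shows "puncture_face n T (face_vertices a b (chords_within n T a b))"
proof -
  interpret nested_chords a b "chords_within n T a b"
    using nested_chords_within[OF valid nc rays(3)] by simp
  have sides: "side n T (ys ! i) (ys ! (i + 1))" if "i + 1 < length ys" for i
    using consecutive_vertices[OF that] unfolding side_def chords_within_def by auto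
  have "\<not> chord n T (ys ! i) (ys ! j)" if ij: "i + 1 < j" "j < length ys" for i j
  proof -
    have "a \<le> ys ! i" "ys ! j \<le> b"
      using vertex_bounds[OF nth_mem] ij by (meson order.strict_trans less_add_one)+
    then show ?thesis using nonadjacent_vertices[OF ij] unfolding chords_within_def by auto
  qed
  moreover have "\<not> ray n T (ys ! i)" if i: "0 < i" "i + 1 < length ys" for i
  proof -
    have "ys ! 0 < ys ! i" "ys ! i < ys ! (length ys - 1)"
      using sorted_wrt_nth_less[OF sorted_vertices] i by auto
    then show ?thesis
      using no_ray hd_vertices last_vertices vertices_ne by (simp add: hd_conv_nth last_conv_nth)
  qed
  ultimately show ?thesis
    unfolding puncture_face_def using length_vertices sorted_vertices sides rays
      hd_vertices last_vertices by auto
qed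

section \<open>An angulation is determined by its start points\<close>

locale angulation =
  fixes n m :: nat and T :: "arc set"
  assumes n_pos: "0 < n" and m_pos: "1 \<le> m" and angulation: "is_angulation m n T"
begin

lemma valid: "valid_arcs n T"
  and noncrossing: "noncrossing n T"
  and has_ray: "\<exists>i. Punct i \<in> T"
  and face_length: "is_face n T xs \<Longrightarrow> length xs = m + 2"
  using angulation unfolding is_angulation_def by auto

abbreviation H :: "int \<Rightarrow> int" where "H \<equiv> height n m (start_points T)"

definition height_law :: "int \<Rightarrow> int \<Rightarrow> bool" where
  "height_law p q \<longleftrightarrow>
    H q = H p - 1 + int m * int (arcs_above n T p q) \<and> (\<forall>y. p < y \<and> y < q \<longrightarrow> H q < H y)"

lemma face_vertex_height_step:
  assumes "nested_chords a b C" and law: "\<And>p q. (p, q) \<in> C \<Longrightarrow> height_law p q"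
    and s: "s + 1 < length (face_vertices a b C)"
  defines "ys \<equiv> face_vertices a b C"
  shows "H (ys ! (s + 1)) = H (ys ! s) - 1 + int m * int (arcs_above n T (ys ! s) (ys ! (s + 1)))"
  using nested_chords.consecutive_vertices[OF assms(1) s] law height_start_points_Suc[OF valid]
  unfolding ys_def height_law_def by auto

lemma covered_point_height:
  assumes "nested_chords a b C" and law: "\<And>p q. (p, q) \<in> C \<Longrightarrow> height_law p q"
    and y: "a \<le> y" "y \<le> b" "y \<notin> set (face_vertices a b C)"
    and floor: "\<And>t. 1 \<le> t \<Longrightarrow> t < length (face_vertices a b C) \<Longrightarrow>
      c \<le> H (face_vertices a b C ! t)"
  shows "c < H y"
proof -
  define ys where "ys = face_vertices a b C"
  obtain s where s: "s + 1 < length ys" "ys ! s < y" "y < ys ! (s + 1)" "(ys ! s, ys ! (s + 1)) \<in> C"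
    using nested_chords.covered_by_side[OF assms(1) y] unfolding ys_def by blast
  then have "H (ys ! (s + 1)) < H y" using law[OF s(4)] unfolding height_law_def by blast
  then show ?thesis using floor[of "s + 1"] s(1) unfolding ys_def by simp
qed

lemma height_law_chord_step:
  assumes ab: "chord n T a b"
    and inner: "\<And>p q. (p, q) \<in> chords_within n T a b - {(a, b)} \<Longrightarrow> height_law p q"
  shows "height_law a b"
proof -
  define C where "C = chords_within n T a b - {(a, b)}"
  define ys where "ys = face_vertices a b C"
  have nested: "nested_chords a b C"
    using chord_length[OF valid ab] unfolding C_def
    by (intro nested_chords_within[OF valid n_pos noncrossing]) (auto simp: chords_within_def)
  have face: "closed_face n T ys"
    using closed_face_below_chord[OF valid n_pos noncrossing ab] unfolding ys_def C_def .
  then have len: "length ys = m + 2"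
    using face_length is_face_map_Fin_iff[OF valid n_pos] by fastforce
  have "ys \<noteq> []" using len by auto
  then have ends: "hd ys = a" "ys ! 0 = a" "last ys = b" "ys ! (m + 1) = b"
    using nested_chords.hd_vertices[OF nested] nested_chords.last_vertices[OF nested] len
    unfolding ys_def by (auto simp: hd_conv_nth last_conv_nth)
  have law: "height_law p q" if "(p, q) \<in> C" for p q
    using inner that unfolding C_def .
  have heights: "H (ys ! t) = H a - int t + int m * (int (arcs_above n T a b) + 1)"
    if "1 \<le> t" "t < length ys" for t
    using closed_face_height[OF valid n_pos noncrossing face face_vertex_height_step[OF nested law, folded ys_def] that]
    unfolding ends .
  have Hb: "H b = H a - 1 + int m * int (arcs_above n T a b)"
    using heights[of "m + 1"] len ends by (simp add: algebra_simps)
  have "H b < H y" if y: "a < y" "y < b" for y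
  proof (cases "y \<in> set ys")
    case True
    then obtain t where t: "t < length ys" "y = ys ! t" by (auto simp: in_set_conv_nth)
    with y ends have "t \<noteq> 0" "t \<noteq> m + 1" by (metis less_irrefl)+
    then show ?thesis using heights[of t] t Hb len by (simp add: distrib_left)
  next
    case False
    have "H b \<le> H (ys ! t)" if "1 \<le> t" "t < length ys" for t
      using heights[OF that] that Hb len by (simp add: distrib_left)
    then show ?thesis using covered_point_height[OF nested law, of y] y False unfolding ys_def by simp
  qed
  then show ?thesis unfolding height_law_def using Hb by blast
qed

lemma height_law_chord:
  assumes "chord n T a b"
  shows "height_law a b"
  using assms
proof (induction "nat (b - a)" arbitrary: a b rule: less_induct)
  case less
  show ?case
  proof (rule height_law_chord_step[OF less.prems])
    fix p q assume "(p, q) \<in> chords_within n T a b - {(a, b)}"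
    then have "chord n T p q" "nat (q - p) < nat (b - a)"
      unfolding chords_within_def chord_def by auto
    then show "height_law p q" using less.hyps by blast
  qed
qed

definition next_ray :: "int \<Rightarrow> int" where
  "next_ray a = a + int (LEAST d::nat. 0 < d \<and> ray n T (a + int d))"

lemma next_ray_props:
  assumes "ray n T a"
  shows "a < next_ray a" "ray n T (next_ray a)" "\<And>y. a < y \<Longrightarrow> y < next_ray a \<Longrightarrow> \<not> ray n T y"
proof -
  define P where "P = (\<lambda>d::nat. 0 < d \<and> ray n T (a + int d))"
  have "P n" unfolding P_def using n_pos ray_shift[of n T a 1] assms by simp
  then have "P (LEAST d. P d)" by (rule LeastI)
  moreover have next_ray: "next_ray a = a + int (LEAST d. P d)" unfolding next_ray_def P_def ..
  ultimately show "a < next_ray a" "ray n T (next_ray a)" unfolding P_def by auto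
  fix y assume "a < y" "y < next_ray a"
  then have "\<not> P (nat (y - a))" using not_less_Least[of "nat (y - a)" P] next_ray by simp
  then show "\<not> ray n T y" using \<open>a < y\<close> unfolding P_def by simp
qed

lemma ray_heights:
  assumes a: "ray n T a"
  shows "H (next_ray a) = H a" "\<And>y. a \<le> y \<Longrightarrow> y \<le> next_ray a \<Longrightarrow> H a \<le> H y"
proof -
  define b where "b = next_ray a"
  define C where "C = chords_within n T a b"
  define ys where "ys = face_vertices a b C"
  note b = next_ray_props[OF a, folded b_def]
  have nested: "nested_chords a b C"
    using nested_chords_within[OF valid n_pos noncrossing b(1)] unfolding C_def by simp
  have law: "height_law p q" if "(p, q) \<in> C" for p q
    using that height_law_chord unfolding C_def chords_within_def by auto
  have face: "puncture_face n T ys"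
    using puncture_face_between_rays[OF valid n_pos noncrossing a b(2,1,3)] unfolding ys_def C_def .
  then have len: "length ys = m + 1"
    using face_length is_face_append_Inf_iff[OF valid n_pos] by fastforce
  have "ys \<noteq> []" using len by auto
  then have ends: "hd ys = a" "ys ! 0 = a" "ys ! m = b"
    using nested_chords.hd_vertices[OF nested] nested_chords.last_vertices[OF nested] len
    unfolding ys_def by (auto simp: hd_conv_nth last_conv_nth)
  have heights: "H (ys ! t) = H a - int t + int m" if "1 \<le> t" "t < length ys" for t
    using puncture_face_height[OF valid n_pos noncrossing face face_vertex_height_step[OF nested law, folded ys_def] that]
    unfolding ends .
  show "H b = H a" using heights[of m] len ends m_pos by simp
  have vertex: "H a \<le> H (ys ! t)" if "t < length ys" for t
    using heights[of t] that len ends by (cases "t = 0") auto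
  fix y assume y: "a \<le> y" "y \<le> b"
  show "H a \<le> H y"
  proof (cases "y \<in> set ys")
    case True
    then show ?thesis using vertex by (auto simp: in_set_conv_nth)
  next
    case False
    then show ?thesis using covered_point_height[OF nested law, of y] y vertex unfolding ys_def by force
  qed
qed

lemma ray_height_min:
  assumes "ray n T a" "a \<le> y"
  shows "H a \<le> H y \<and> (ray n T y \<longrightarrow> H y = H a)"
  using assms
proof (induction "nat (y - a)" arbitrary: a rule: less_induct)
  case less
  note b = next_ray_props[OF less.prems(1)] and heights = ray_heights[OF less.prems(1)]
  show ?case
  proof (cases "y \<le> next_ray a")
    case True
    show ?thesis
    proof (intro conjI impI)
      show "H a \<le> H y" using heights(2) less.prems(2) True by simp
      assume "ray n T y"
      then have "\<not> (a < y \<and> y < next_ray a)" using b(3) by blast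
      then have "y = a \<or> y = next_ray a" using less.prems(2) True by linarith
      then show "H y = H a" using heights(1) by auto
    qed
  next
    case False
    then have "H (next_ray a) \<le> H y \<and> (ray n T y \<longrightarrow> H y = H (next_ray a))"
      using less.hyps[of "next_ray a"] b(1,2) by simp
    then show ?thesis using heights(1) by simp
  qed
qed

lemma n_eq_m_card: "n = m * card T"
proof -
  obtain i where "Punct i \<in> T" using has_ray by blast
  moreover from this have "i < n" using valid unfolding valid_arc_def by fastforce
  ultimately have ray: "ray n T (int i)" "ray n T (int i + int n)"
    using ray_shift[of n T "int i" 1] unfolding ray_def by simp_all
  then have "H (int i + int n) = H (int i)" using ray_height_min[OF ray(1), of "int i + int n"] by simp
  then have "int m * int (size (start_points T)) = int n"
    using height_add_period[OF set_start_points[OF valid]] by simp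
  then have "m * card T = n"
    by (simp only: size_start_points of_nat_mult[symmetric] of_nat_eq_iff)
  then show ?thesis by simp
qed

lemma ray_height_le:
  assumes "ray n T a"
  shows "H a \<le> H y"
proof -
  define j where "j = (a - y) div int n + 1"
  have "(a - y) div int n * int n + (a - y) mod int n = a - y" by (rule div_mult_mod_eq)
  moreover have "(a - y) mod int n < int n" using n_pos by simp
  ultimately have "a \<le> y + j * int n" unfolding j_def distrib_right by linarith
  then have "H a \<le> H (y + j * int n)" using ray_height_min[OF assms] by simp
  moreover have "n = m * size (start_points T)" using n_eq_m_card size_start_points by simp
  then have "H (y + j * int n) = H y" by (rule height_periodic[OF set_start_points[OF valid]])
  ultimately show ?thesis by simp
qed

lemma multiset_arcs_start_points: "multiset_arcs n m (start_points T)"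
  using n_pos m_pos set_start_points[OF valid] n_eq_m_card size_start_points
  by unfold_locales simp_all

interpretation S: multiset_arcs n m "start_points T"
  by (rule multiset_arcs_start_points)

lemma ray_height_eq_min:
  assumes "ray n T a"
  shows "H a = S.h_min"
proof -
  obtain x where "H x = S.h_min" using S.h_min_attained by blast
  then show ?thesis using ray_height_le[OF assms, of x] S.h_min_le[of a] by simp
qed

lemma deg_start_points: "S.deg x = out_degree n T x"
  unfolding S.deg_def by (rule count_start_points[OF valid])

lemma ray_imp_ray_arcs: "ray n T a \<Longrightarrow> ray n S.arcs a"
  using ray_height_eq_min S.ray_arcs_iff by simp

lemma chord_imp_chord_arcs:
  assumes ab: "chord n T a b"
  shows "chord n S.arcs a b"
proof -
  define k where "k = arcs_above n T a b"
  have law: "H b = S.level a k" "\<And>y. a < y \<Longrightarrow> y < b \<Longrightarrow> S.level a k < H y"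
    using height_law_chord[OF ab] unfolding height_law_def S.level_def k_def by auto
  have "k < S.deg a"
    unfolding k_def deg_start_points by (rule arcs_above_less_out_degree[OF valid ab])
  moreover have "\<not> (k = 0 \<and> H a = S.h_min)"
    using law(1) S.h_min_le[of b] unfolding S.level_def by auto
  ultimately have index: "S.chord_index a k" unfolding S.chord_index_def by simp
  have "S.endpoint a k = b"
    unfolding S.endpoint_def using ab law by (intro first_below_eqI) (auto simp: chord_def)
  then show ?thesis unfolding S.chord_arcs_iff using index by blast
qed

lemma arcs_start_points: "S.arcs = T"
proof -
  have "T \<subseteq> S.arcs"
  proof
    fix \<alpha> assume \<alpha>: "\<alpha> \<in> T"
    show "\<alpha> \<in> S.arcs"
    proof (cases \<alpha>)
      case (Punct i)
      then have "i < n" using \<alpha> valid unfolding valid_arc_def by auto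
      then have "ray n T (int i)" using \<alpha> Punct unfolding ray_def by simp
      then have "ray n S.arcs (int i)" by (rule ray_imp_ray_arcs)
      then show ?thesis using \<open>i < n\<close> Punct unfolding ray_def by simp
    next
      case (Bdry i d)
      then have "i < n" "2 \<le> d" using \<alpha> valid unfolding valid_arc_def by auto
      then have "chord n T (int i) (int i + int d)" using \<alpha> Bdry unfolding chord_def by simp
      then have "chord n S.arcs (int i) (int i + int d)" by (rule chord_imp_chord_arcs)
      then show ?thesis using \<open>i < n\<close> Bdry unfolding chord_def by simp
    qed
  qed
  moreover have "card S.arcs = card T"
    using size_start_points[of S.arcs] unfolding S.start_points_arcs size_start_points by simp
  ultimately have "T = S.arcs" by (intro card_subset_eq[OF S.finite_arcs]) simp_all
  then show ?thesis ..
qed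

end

section \<open>Counting\<close>

lemma binomial_swap_mult: "l * ((n + l - 1) choose l) = n * ((n + l - 1) choose n)"
proof (cases "l = 0 \<or> n = 0")
  case True
  then show ?thesis by auto
next
  case False
  then obtain a b where ab: "l = Suc a" "n = Suc b" by (metis not0_implies_Suc)
  have "Suc (a + b) choose a = Suc (a + b) choose Suc b"
    using binomial_symmetric[of a "Suc (a + b)"] by simp
  then show ?thesis
    using Suc_times_binomial_add[of a b] ab by (simp add: add.commute)
qed

lemma bij_betw_start_points_angulations:
  assumes "1 \<le> m" "1 \<le> l" "n = m * l"
  shows "bij_betw start_points {T. is_angulation m n T} (multisets_of_size {..<n} l)"
proof (rule bij_betw_imageI)
  have n_pos: "0 < n" using assms by simp
  show "inj_on start_points {T. is_angulation m n T}"
  proof (rule inj_onI)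
    fix T1 T2 assume "T1 \<in> {T. is_angulation m n T}" "T2 \<in> {T. is_angulation m n T}"
      and eq: "start_points T1 = start_points T2"
    then have "angulation n m T1" "angulation n m T2"
      using n_pos assms(1) unfolding angulation_def by simp_all
    then show "T1 = T2" using angulation.arcs_start_points eq by metis
  qed
  show "start_points ` {T. is_angulation m n T} = multisets_of_size {..<n} l"
  proof (intro equalityI subsetI)
    fix M assume "M \<in> start_points ` {T. is_angulation m n T}"
    then obtain T where T: "is_angulation m n T" "M = start_points T" by auto
    then interpret angulation n m T using n_pos assms(1) by unfold_locales
    show "M \<in> multisets_of_size {..<n} l"
      using T set_start_points[OF valid] size_start_points n_eq_m_card assms
      unfolding multisets_of_size_def by simp
  next
    fix M assume "M \<in> multisets_of_size {..<n} l"
    then interpret multiset_arcs n m M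
      using n_pos assms unfolding multisets_of_size_def by unfold_locales auto
    have "arcs \<in> {T. is_angulation m n T}" using is_angulation_arcs by simp
    then show "M \<in> start_points ` {T. is_angulation m n T}"
      by (rule rev_image_eqI) (rule start_points_arcs[symmetric])
  qed
qed

theorem corollary3p6:
  fixes m l n :: nat
  assumes "m \<ge> 1" and "l \<ge> 1" and "n = m * l"
  shows "card {T. is_angulation m n T} = m * ((n + l - 1) choose n)
       \<and> card {T. is_angulation m n T} = (n + l - 1) choose l"
proof -
  have count: "card {T. is_angulation m n T} = (n + l - 1) choose l"
    using bij_betw_same_card[OF bij_betw_start_points_angulations[OF assms]]
      card_multisets_of_size[of "{..<n}" l] by simp
  have "l * ((n + l - 1) choose l) = l * (m * ((n + l - 1) choose n))"
    using binomial_swap_mult[of l n] assms(3) by (simp add: mult.assoc mult.left_commute)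
  then have "(n + l - 1) choose l = m * ((n + l - 1) choose n)" using assms(2) by simp
  with count show ?thesis by simp
qed

end
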